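(* Let $d \geq 3$ and let $C \subset \mathbb{R}^d$ be a smooth $d$-dimensional combinatorial cube with faces labeled $F_I^J$ via a fixed face-poset isomorphism with $[0,1]^d$. Suppose that every smooth combinatorial cube of dimension smaller than $d$ has two parallel facets. Fix $x,y \in \{1,\dots,d\}$ with $x\neq y$, and suppose that the four $(d-2)$-dimensional faces $F_{xy}, F_{x\bar y}, F_{\bar x y}, F_{\bar x\bar y}$ are all parallel to one another. Then either $F_x$ and $F_{\bar x}$ are parallel, or $F_y$ and $F_{\bar y}$ are parallel.
   Context: A lattice polytope is the convex hull of finitely many points of $\mathbb{Z}^n$. An $n$-dimensional polytope is simple if each vertex lies in exactly $n$ edges; the primitive edge directions at a vertex are the smallest lattice vectors along its incident edges; an $n$-dimensional lattice polytope in $\mathbb{R}^n$ is smooth if it is simple and at every vertex the primitive edge directions form a basis of $\mathbb{Z}^n$. An $n$-dimensional combinatorial cube is a polytope whose face poset is isomorphic to that of $[0,1]^n$. For disjoint $I,J \subseteq \{1,\dots,d\}$ the face of $[0,1]^d$ given by $x_k=0$ for $k\in I$ and $x_k = 1$ for $k \in J$ is denoted $F_I^J$, and the corresponding face of $C$ is also denoted $F_I^J$. Elements of $J$ are written with a bar and elements of $I$ without, e.g. $F_{x\bar y} = F_{\{x\}}^{\{y\}}$, $F_{\bar x} = F_\emptyset^{\{x\}}$, $F_x = F_{\{x\}}^\emptyset$. Two faces $F,G$ are parallel if $\mathrm{lin}(F)=\mathrm{lin}(G)$, where $\mathrm{lin}(F)$ is the linear subspace parallel to the affine hull of $F$. 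*)

theory Defs
  imports "HOL-Analysis.Analysis"
begin

text \<open>A lower-dimensional space R^k is
modelled as the coordinate subspace indexed by a set K of coordinates with card K = k,
with lattice the integer points of that subspace.\<close>

definition integral_vec :: "real^'d \<Rightarrow> bool" where
  "integral_vec v \<longleftrightarrow> (\<forall>i. v $ i \<in> \<int>)"

definition coord_space :: "'d set \<Rightarrow> (real^'d) set" where
  "coord_space K = {v. \<forall>i. i \<notin> K \<longrightarrow> v $ i = 0}"

definition lattice_polytope :: "(real^'d) set \<Rightarrow> bool" where
  "lattice_polytope P \<longleftrightarrow>
     (\<exists>S. finite S \<and> (\<forall>v\<in>S. integral_vec v) \<and> P = convex hull S)"

definition edges_at :: "(real^'d) set \<Rightarrow> real^'d \<Rightarrow> (real^'d) set set" where
  "edges_at P v = {E. E face_of P \<and> aff_dim E = 1 \<and> v \<in> E}"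

definition simple_polytope :: "nat \<Rightarrow> (real^'d) set \<Rightarrow> bool" where
  "simple_polytope n P \<longleftrightarrow> (\<forall>v. v extreme_point_of P \<longrightarrow> card (edges_at P v) = n)"

definition prim_edge_dirs :: "(real^'d) set \<Rightarrow> real^'d \<Rightarrow> (real^'d) set" where
  "prim_edge_dirs P v = {u. integral_vec u \<and> u \<noteq> 0 \<and>
      (\<exists>E\<in>edges_at P v. \<exists>t>0. v + t *\<^sub>R u \<in> E) \<and>
      (\<forall>t. 0 < t \<and> t < 1 \<longrightarrow> \<not> integral_vec (t *\<^sub>R u))}"

definition lattice_basis :: "'d set \<Rightarrow> (real^'d) set \<Rightarrow> bool" where
  "lattice_basis K B \<longleftrightarrow>
     B \<subseteq> coord_space K \<and> (\<forall>b\<in>B. integral_vec b) \<and> independent B \<and>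
     (\<forall>z. integral_vec z \<and> z \<in> coord_space K \<longrightarrow>
        (\<exists>c. (\<forall>b\<in>B. c b \<in> \<int>) \<and> z = (\<Sum>b\<in>B. c b *\<^sub>R b)))"

definition smooth_polytope :: "'d set \<Rightarrow> (real^'d) set \<Rightarrow> bool" where
  "smooth_polytope K P \<longleftrightarrow>
     lattice_polytope P \<and> P \<subseteq> coord_space K \<and> aff_dim P = int (card K) \<and>
     simple_polytope (card K) P \<and>
     (\<forall>v. v extreme_point_of P \<longrightarrow> lattice_basis K (prim_edge_dirs P v))"

definition unit_cube :: "'d set \<Rightarrow> (real^'d) set" where
  "unit_cube K = {v. (\<forall>i\<in>K. 0 \<le> v $ i \<and> v $ i \<le> 1) \<and> (\<forall>i. i \<notin> K \<longrightarrow> v $ i = 0)}"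

definition face_poset_iso ::
    "'d set \<Rightarrow> (real^'d) set \<Rightarrow> ((real^'d) set \<Rightarrow> (real^'d) set) \<Rightarrow> bool" where
  "face_poset_iso K P \<phi> \<longleftrightarrow>
     bij_betw \<phi> {F. F face_of P} {G. G face_of unit_cube K} \<and>
     (\<forall>F G. F face_of P \<and> G face_of P \<longrightarrow> (F \<subseteq> G \<longleftrightarrow> \<phi> F \<subseteq> \<phi> G))"

definition comb_cube :: "'d set \<Rightarrow> (real^'d) set \<Rightarrow> bool" where
  "comb_cube K P \<longleftrightarrow> (\<exists>\<phi>. face_poset_iso K P \<phi>)"

definition cube_face :: "'d set \<Rightarrow> 'd set \<Rightarrow> (real^'d) set" where
  "cube_face I J = {v \<in> unit_cube UNIV. (\<forall>k\<in>I. v $ k = 0) \<and> (\<forall>k\<in>J. v $ k = 1)}"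

definition lab_face ::
    "(real^'d) set \<Rightarrow> ((real^'d) set \<Rightarrow> (real^'d) set) \<Rightarrow> 'd set \<Rightarrow> 'd set \<Rightarrow> (real^'d) set" where
  "lab_face P \<phi> I J = inv_into {F. F face_of P} \<phi> (cube_face I J)"

definition lin_space :: "(real^'d) set \<Rightarrow> (real^'d) set" where
  "lin_space F = span {u - w | u w. u \<in> F \<and> w \<in> F}"

definition parallel_faces :: "(real^'d) set \<Rightarrow> (real^'d) set \<Rightarrow> bool" where
  "parallel_faces F G \<longleftrightarrow> lin_space F = lin_space G"

end

theory Submission
  imports Defs
begin

text \<open>Let L be the common direction space of the four ridges F_{xy}, F_{x\bar y}, F_{\bar x\bar y},
  F_{\bar x y}.  At a vertex of each ridge, smoothness gives exactly two primitive edge directions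
  leaving the ridge, one towards each neighbouring ridge, and modulo L they form a basis of the
  rank two lattice (Z^d + L) / L.  The direction from one ridge to the next is, modulo L, the
  negative of the direction coming back, so going around the four ridges produces lattice vectors
  p_0, ..., p_3 of the quotient plane with det (p_i, p_{i+1}) = +-1, and the facet normals show
  that these four determinants have the same sign.  Such a unimodular quadrilateral has
  p_2 = - p_0 or p_3 = - p_1.  Since modulo L the facets F_x, F_{\bar y}, F_{\bar x}, F_y are
  spanned by p_0, ..., p_3 respectively, two opposite facets are parallel.\<close>

section \<open>Unimodular quadrilaterals in the plane\<close>

lemma Ints_mult_eq_1_abs:
  fixes x y :: real
  assumes "x \<in> \<int>" "y \<in> \<int>" "x * y = 1"
  shows "\<bar>x\<bar> = 1"
proof -
  have "1 \<le> \<bar>x\<bar>" "1 \<le> \<bar>y\<bar>"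
    using assms Ints_nonzero_abs_ge1 by force+
  have "\<bar>x\<bar> * 1 \<le> \<bar>x\<bar> * \<bar>y\<bar>"
    using \<open>1 \<le> \<bar>y\<bar>\<close> by (intro mult_left_mono) auto
  also have "\<dots> = 1"
    using assms(3) by (simp add: abs_mult[symmetric])
  finally show ?thesis
    using \<open>1 \<le> \<bar>x\<bar>\<close> by simp
qed

lemma det2_same_sign:
  fixes g1 g2 p1 p2 q1 q2 r1 r2 :: real
  assumes "g1*p1 + g2*p2 = 0" and "g1*q1 + g2*q2 > 0" and "g1*r1 + g2*r2 < 0"
    and "p1 \<noteq> 0 \<or> p2 \<noteq> 0"
  shows "(q1*p2 - q2*p1) * (p1*r2 - p2*r1) > 0"
proof -
  have "p1\<^sup>2 + p2\<^sup>2 > 0"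
    using assms(4) by (simp add: sum_power2_gt_zero_iff)
  then have "(g1*q1 + g2*q2) * (g1*r1 + g2*r2) * (p1\<^sup>2 + p2\<^sup>2) < 0"
    using assms(2,3) by (simp add: mult_pos_neg mult_neg_pos)
  moreover have "(g1*q1 + g2*q2) * (g1*r1 + g2*r2) * (p1\<^sup>2 + p2\<^sup>2)
      = - ((g1\<^sup>2 + g2\<^sup>2) * ((q1*p2 - q2*p1) * (p1*r2 - p2*r1)))"
    using assms(1) by algebra
  ultimately have "0 < (g1\<^sup>2 + g2\<^sup>2) * ((q1*p2 - q2*p1) * (p1*r2 - p2*r1))"
    by linarith
  moreover have "0 \<le> g1\<^sup>2 + g2\<^sup>2"
    by simp
  ultimately show ?thesis
    by (metis zero_less_mult_iff not_less)
qed

lemma unimodular_cycle_opposite: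
  fixes a0 b0 a1 b1 a2 b2 a3 b3 \<epsilon> :: real
  assumes "a0*b1 - b0*a1 = \<epsilon>" "a1*b2 - b1*a2 = \<epsilon>" "a2*b3 - b2*a3 = \<epsilon>" "a3*b0 - b3*a0 = \<epsilon>"
    and "\<bar>\<epsilon>\<bar> = 1"
  shows "a2 = -a0 \<and> b2 = -b0 \<or> a3 = -a1 \<and> b3 = -b1"
proof -
  define k where "k = a0*b2 - b0*a2"
  define m where "m = a1*b3 - b1*a3"
  have dets: "a0*b1 - b0*a1 - \<epsilon> = 0" "a1*b2 - b1*a2 - \<epsilon> = 0" "a2*b3 - b2*a3 - \<epsilon> = 0"
    "a3*b0 - b3*a0 - \<epsilon> = 0"
    using assms(1-4) by simp_all
  have "\<epsilon>*(a0 + a2) = k*a1" "\<epsilon>*(b0 + b2) = k*b1" "\<epsilon>*(a1 + a3) = m*a2" "\<epsilon>*(b1 + b3) = m*b2"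
    using dets unfolding k_def m_def by algebra+
  moreover have "k*m = 0"
    using dets unfolding k_def m_def by algebra
  moreover have "\<epsilon> \<noteq> 0"
    using assms(5) by auto
  ultimately show ?thesis
    by (metis add_eq_0_iff mult_eq_0_iff)
qed

section \<open>Lattice bases modulo a subspace\<close>

text \<open>The images of e and f form a basis of the lattice (Z^d + L) / L.\<close>

definition lattice_basis_mod :: "(real^'d) set \<Rightarrow> real^'d \<Rightarrow> real^'d \<Rightarrow> bool" where
  "lattice_basis_mod L e f \<longleftrightarrow> integral_vec e \<and> integral_vec f \<and>
     (\<forall>a b. a *\<^sub>R e + b *\<^sub>R f \<in> L \<longrightarrow> a = 0 \<and> b = 0) \<and>
     (\<forall>z. integral_vec z \<longrightarrow> (\<exists>a\<in>\<int>. \<exists>b\<in>\<int>. z - a *\<^sub>R e - b *\<^sub>R f \<in> L))"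

lemma lattice_basis_mod_coords_unique:
  assumes L: "subspace L" and "lattice_basis_mod L e f"
    and "z - a *\<^sub>R e - b *\<^sub>R f \<in> L" "z - a' *\<^sub>R e - b' *\<^sub>R f \<in> L"
  shows "a = a' \<and> b = b'"
proof -
  have "(a' - a) *\<^sub>R e + (b' - b) *\<^sub>R f = (z - a *\<^sub>R e - b *\<^sub>R f) - (z - a' *\<^sub>R e - b' *\<^sub>R f)"
    by (simp add: algebra_simps)
  also have "\<dots> \<in> L"
    using L assms(3,4) by (rule subspace_diff)
  finally have "a' - a = 0 \<and> b' - b = 0"
    using assms(2) unfolding lattice_basis_mod_def by blast
  then show ?thesis
    by simp
qed

lemma subspace_coords_subst:
  assumes L: "subspace L" and "z - c1 *\<^sub>R u - c2 *\<^sub>R w \<in> L"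
    and "u - p1 *\<^sub>R e - p2 *\<^sub>R f \<in> L" "w - q1 *\<^sub>R e - q2 *\<^sub>R f \<in> L"
  shows "z - (c1*p1 + c2*q1) *\<^sub>R e - (c1*p2 + c2*q2) *\<^sub>R f \<in> L"
proof -
  have "z - (c1*p1 + c2*q1) *\<^sub>R e - (c1*p2 + c2*q2) *\<^sub>R f
      = (z - c1 *\<^sub>R u - c2 *\<^sub>R w) + c1 *\<^sub>R (u - p1 *\<^sub>R e - p2 *\<^sub>R f) + c2 *\<^sub>R (w - q1 *\<^sub>R e - q2 *\<^sub>R f)"
    by (simp add: algebra_simps)
  also have "\<dots> \<in> L"
    using assms by (intro subspace_add subspace_scale)
  finally show ?thesis .
qed

lemma lattice_basis_mod_span:
  fixes L :: "(real^'d) set"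
  assumes L: "subspace L" and "lattice_basis_mod L e f"
  obtains a b where "w - a *\<^sub>R e - b *\<^sub>R f \<in> L"
proof -
  let ?S = "{w. \<exists>a b. w - a *\<^sub>R e - b *\<^sub>R f \<in> L}"
  have "subspace ?S"
  proof (unfold subspace_def, intro conjI ballI allI)
    show "0 \<in> ?S"
      using L by (auto intro!: exI[of _ 0] simp: subspace_0)
  next
    fix x y assume "x \<in> ?S" "y \<in> ?S"
    then obtain a b a' b' where xy: "x - a *\<^sub>R e - b *\<^sub>R f \<in> L" "y - a' *\<^sub>R e - b' *\<^sub>R f \<in> L"
      by blast
    have "x + y - (a + a') *\<^sub>R e - (b + b') *\<^sub>R f
        = (x - a *\<^sub>R e - b *\<^sub>R f) + (y - a' *\<^sub>R e - b' *\<^sub>R f)"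
      by (simp add: algebra_simps)
    with subspace_add[OF L xy] show "x + y \<in> ?S"
      by (metis (mono_tags, lifting) mem_Collect_eq)
  next
    fix c x assume "x \<in> ?S"
    then obtain a b where x: "x - a *\<^sub>R e - b *\<^sub>R f \<in> L"
      by blast
    have "c *\<^sub>R x - (c * a) *\<^sub>R e - (c * b) *\<^sub>R f = c *\<^sub>R (x - a *\<^sub>R e - b *\<^sub>R f)"
      by (simp add: algebra_simps)
    with subspace_scale[OF L x] show "c *\<^sub>R x \<in> ?S"
      by (metis (mono_tags, lifting) mem_Collect_eq)
  qed
  moreover have "Basis \<subseteq> ?S"
  proof
    fix x :: "real^'d" assume "x \<in> Basis"
    then have "integral_vec x"
      by (auto simp: Basis_vec_def integral_vec_def axis_def)
    then show "x \<in> ?S"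
      using assms(2) unfolding lattice_basis_mod_def by blast
  qed
  ultimately have "span Basis \<subseteq> ?S"
    by (rule span_minimal[rotated])
  then show ?thesis
    using that by auto
qed

lemma lattice_basis_mod_det:
  assumes L: "subspace L" and ef: "lattice_basis_mod L e f" and uw: "lattice_basis_mod L u w"
    and u: "u - p1 *\<^sub>R e - p2 *\<^sub>R f \<in> L" and w: "w - q1 *\<^sub>R e - q2 *\<^sub>R f \<in> L"
    and ints: "p1 \<in> \<int>" "p2 \<in> \<int>" "q1 \<in> \<int>" "q2 \<in> \<int>"
  shows "\<bar>p1*q2 - p2*q1\<bar> = 1"
proof -
  have triv: "e - 1 *\<^sub>R e - 0 *\<^sub>R f \<in> L" "f - 0 *\<^sub>R e - 1 *\<^sub>R f \<in> L"
    using L by (simp_all add: subspace_0)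
  obtain c1 c2 where c: "c1 \<in> \<int>" "c2 \<in> \<int>" "e - c1 *\<^sub>R u - c2 *\<^sub>R w \<in> L"
    using uw ef unfolding lattice_basis_mod_def by blast
  obtain d1 d2 where d: "d1 \<in> \<int>" "d2 \<in> \<int>" "f - d1 *\<^sub>R u - d2 *\<^sub>R w \<in> L"
    using uw ef unfolding lattice_basis_mod_def by blast
  have "c1*p1 + c2*q1 = 1" "c1*p2 + c2*q2 = 0"
    using lattice_basis_mod_coords_unique[OF L ef subspace_coords_subst[OF L c(3) u w] triv(1)]
    by simp_all
  moreover have "d1*p1 + d2*q1 = 0" "d1*p2 + d2*q2 = 1"
    using lattice_basis_mod_coords_unique[OF L ef subspace_coords_subst[OF L d(3) u w] triv(2)]
    by simp_all
  ultimately have "(p1*q2 - p2*q1) * (c1*d2 - c2*d1) = 1"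
    by algebra
  moreover have "p1*q2 - p2*q1 \<in> \<int>" "c1*d2 - c2*d1 \<in> \<int>"
    using ints c d by (intro Ints_diff Ints_mult; simp)+
  ultimately show ?thesis
    using Ints_mult_eq_1_abs by blast
qed

lemma lattice_basis_mod_opposite:
  assumes L: "subspace L" and ef: "lattice_basis_mod L e f" and ef': "lattice_basis_mod L e' f'"
    and st: "s > 0" "t > 0" "s *\<^sub>R e + t *\<^sub>R f' \<in> L"
  shows "e + f' \<in> L"
proof -
  have f': "f' - (- s/t) *\<^sub>R e - 0 *\<^sub>R f \<in> L"
    using subspace_scale[OF L st(3), of "1/t"] st(2) by (simp add: algebra_simps)
  have e: "e - 0 *\<^sub>R e' - (- t/s) *\<^sub>R f' \<in> L"
    using subspace_scale[OF L st(3), of "1/s"] st(1) by (simp add: algebra_simps)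
  obtain c d where "c \<in> \<int>" "f' - c *\<^sub>R e - d *\<^sub>R f \<in> L"
    using ef ef' unfolding lattice_basis_mod_def by blast
  then have "s/t \<in> \<int>"
    using lattice_basis_mod_coords_unique[OF L ef _ f']
    by (metis Ints_minus minus_divide_left minus_minus)
  obtain a b where "b \<in> \<int>" "e - a *\<^sub>R e' - b *\<^sub>R f' \<in> L"
    using ef ef' unfolding lattice_basis_mod_def by blast
  then have "t/s \<in> \<int>"
    using lattice_basis_mod_coords_unique[OF L ef' _ e]
    by (metis Ints_minus minus_divide_left minus_minus)
  have "s/t = 1"
    using Ints_mult_eq_1_abs[OF \<open>s/t \<in> \<int>\<close> \<open>t/s \<in> \<int>\<close>] st(1,2) by simp
  then have "e + f' = (1/s) *\<^sub>R (s *\<^sub>R e + t *\<^sub>R f')"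
    using st(1) by (simp add: algebra_simps)
  then show ?thesis
    using subspace_scale[OF L st(3)] by simp
qed

lemma span_lattice_basis:
  fixes B :: "(real^'d) set"
  assumes "lattice_basis UNIV B"
  shows "span B = UNIV"
proof -
  have "Basis \<subseteq> span B"
  proof
    fix x :: "real^'d" assume "x \<in> Basis"
    then have "integral_vec x"
      by (auto simp: Basis_vec_def integral_vec_def axis_def)
    then obtain c where "x = (\<Sum>b\<in>B. c b *\<^sub>R b)"
      using assms unfolding lattice_basis_def coord_space_def by blast
    then show "x \<in> span B"
      by (simp add: span_sum span_scale span_base)
  qed
  then show ?thesis
    using span_minimal[OF _ subspace_span, of Basis B] by auto
qed

lemma independent_mod_by_normals:
  assumes "\<And>l. l \<in> L \<Longrightarrow> n \<bullet> l = 0" "\<And>l. l \<in> L \<Longrightarrow> n' \<bullet> l = 0"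
    and "n \<bullet> e \<noteq> 0" "n \<bullet> f = 0" "n' \<bullet> e = 0" "n' \<bullet> f \<noteq> 0"
    and "a *\<^sub>R e + b *\<^sub>R f \<in> L"
  shows "a = 0 \<and> b = 0"
  using assms(1,2)[OF assms(7)] assms(3-6) by (simp add: inner_add_right)

lemma lattice_basis_mod_of_lattice_basis:
  assumes L: "subspace L" and B: "lattice_basis UNIV B" "e \<in> B" "f \<in> B" "B - {e, f} \<subseteq> L"
    and indep: "\<And>a b. a *\<^sub>R e + b *\<^sub>R f \<in> L \<Longrightarrow> a = 0 \<and> b = 0"
  shows "lattice_basis_mod L e f"
proof -
  have int: "\<forall>b\<in>B. integral_vec b" and "independent B"
    and lat: "\<forall>z. integral_vec z \<longrightarrow> (\<exists>c. (\<forall>b\<in>B. c b \<in> \<int>) \<and> z = (\<Sum>b\<in>B. c b *\<^sub>R b))"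
    using B(1) by (simp_all add: lattice_basis_def coord_space_def)
  then have "finite B"
    using independent_bound by blast
  have "e \<noteq> f"
  proof
    assume "e = f"
    then have "1 *\<^sub>R e + (-1) *\<^sub>R f \<in> L"
      using subspace_0[OF L] by simp
    from indep[OF this] show False
      by simp
  qed
  have "\<exists>a\<in>\<int>. \<exists>b\<in>\<int>. z - a *\<^sub>R e - b *\<^sub>R f \<in> L" if z: "integral_vec z" for z
  proof -
    obtain c where c: "\<forall>u\<in>B. c u \<in> \<int>" "z = (\<Sum>u\<in>B. c u *\<^sub>R u)"
      using lat z by blast
    have "(\<Sum>u\<in>B. c u *\<^sub>R u) = c e *\<^sub>R e + (\<Sum>u\<in>B - {e}. c u *\<^sub>R u)"
      using sum.remove[OF \<open>finite B\<close> B(2)] by simp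
    also have "(\<Sum>u\<in>B - {e}. c u *\<^sub>R u) = c f *\<^sub>R f + (\<Sum>u\<in>B - {e} - {f}. c u *\<^sub>R u)"
      using sum.remove[of "B - {e}" f] \<open>finite B\<close> B(3) \<open>e \<noteq> f\<close> by simp
    finally have "z - c e *\<^sub>R e - c f *\<^sub>R f = (\<Sum>u\<in>B - {e, f}. c u *\<^sub>R u)"
      using c(2) by (simp add: Diff_insert2[symmetric])
    also have "\<dots> \<in> L"
      using B(4) by (intro subspace_sum[OF L] subspace_scale[OF L]) auto
    finally show ?thesis
      using c(1) B(2,3) by blast
  qed
  then show ?thesis
    using indep int B(2,3) unfolding lattice_basis_mod_def by blast
qed

text \<open>Modulo L the hypotheses force f (i + 1) = - e i, so that the normal n i separates e (i - 1)
  from e (i + 1).\<close>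

locale lattice_cycle =
  fixes L :: "(real^'d) set" and e f n :: "nat \<Rightarrow> real^'d"
  assumes L: "subspace L"
    and basis: "\<And>i. lattice_basis_mod L (e i) (f i)"
    and adjacent: "\<And>i. \<exists>s>0. \<exists>t>0. s *\<^sub>R e i + t *\<^sub>R f (Suc i) \<in> L"
    and normal: "\<And>i l. l \<in> L \<Longrightarrow> n i \<bullet> l = 0"
    and n_e: "\<And>i. n i \<bullet> e i = 0" and n_f: "\<And>i. n i \<bullet> f i < 0"
    and n_e_Suc: "\<And>i. n i \<bullet> e (Suc i) < 0"
begin

lemma opposite_dirs: "e i + f (Suc i) \<in> L"
  using adjacent[of i] lattice_basis_mod_opposite[OF L basis basis] by blast

lemma normal_coords:
  assumes "w - \<alpha> *\<^sub>R e 0 - \<beta> *\<^sub>R f 0 \<in> L"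
  shows "n j \<bullet> w = \<alpha> * (n j \<bullet> e 0) + \<beta> * (n j \<bullet> f 0)"
  using normal[OF assms, of j] by (simp add: inner_diff_right)

lemma det_unit:
  assumes "e i - \<alpha> *\<^sub>R e 0 - \<beta> *\<^sub>R f 0 \<in> L" "e (Suc i) - \<alpha>' *\<^sub>R e 0 - \<beta>' *\<^sub>R f 0 \<in> L"
    and "\<alpha> \<in> \<int>" "\<beta> \<in> \<int>" "\<alpha>' \<in> \<int>" "\<beta>' \<in> \<int>"
  shows "\<bar>\<alpha> * \<beta>' - \<beta> * \<alpha>'\<bar> = 1"
proof -
  have "f (Suc i) - (- \<alpha>) *\<^sub>R e 0 - (- \<beta>) *\<^sub>R f 0
      = (e i + f (Suc i)) - (e i - \<alpha> *\<^sub>R e 0 - \<beta> *\<^sub>R f 0)"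
    by (simp add: algebra_simps)
  also have "\<dots> \<in> L"
    by (rule subspace_diff[OF L opposite_dirs assms(1)])
  finally have "f (Suc i) - (- \<alpha>) *\<^sub>R e 0 - (- \<beta>) *\<^sub>R f 0 \<in> L" .
  from lattice_basis_mod_det[OF L basis basis assms(2) this] assms(3-6) show ?thesis
    by (simp add: algebra_simps)
qed

lemma det_sign:
  assumes "e i - \<alpha> *\<^sub>R e 0 - \<beta> *\<^sub>R f 0 \<in> L" "e (Suc i) - \<alpha>' *\<^sub>R e 0 - \<beta>' *\<^sub>R f 0 \<in> L"
    "e (Suc (Suc i)) - \<alpha>'' *\<^sub>R e 0 - \<beta>'' *\<^sub>R f 0 \<in> L" and "\<alpha>' \<noteq> 0 \<or> \<beta>' \<noteq> 0"
  shows "(\<alpha> * \<beta>' - \<beta> * \<alpha>') * (\<alpha>' * \<beta>'' - \<beta>' * \<alpha>'') > 0"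
proof -
  define g1 g2 where "g1 = n (Suc i) \<bullet> e 0" and "g2 = n (Suc i) \<bullet> f 0"
  have "g1 * \<alpha>' + g2 * \<beta>' = 0"
    using n_e[of "Suc i"] normal_coords[OF assms(2)] by (simp add: g1_def g2_def mult.commute)
  moreover have "n (Suc i) \<bullet> e i = - (n (Suc i) \<bullet> f (Suc i))"
    using normal[OF opposite_dirs[of i], of "Suc i"] by (simp add: inner_add_right)
  then have "g1 * \<alpha> + g2 * \<beta> > 0"
    using n_f[of "Suc i"] normal_coords[OF assms(1)] by (simp add: g1_def g2_def mult.commute)
  moreover have "g1 * \<alpha>'' + g2 * \<beta>'' < 0"
    using n_e_Suc[of "Suc i"] normal_coords[OF assms(3)] by (simp add: g1_def g2_def mult.commute)
  ultimately show ?thesis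
    using assms(4) by (rule det2_same_sign)
qed

theorem opposite:
  assumes period: "e 4 = e 0"
  shows "e 0 + e 2 \<in> L \<or> e 1 + e 3 \<in> L"
proof -
  have "\<forall>i. \<exists>a\<in>\<int>. \<exists>b\<in>\<int>. e i - a *\<^sub>R e 0 - b *\<^sub>R f 0 \<in> L"
    using basis unfolding lattice_basis_mod_def by blast
  then obtain a b where a: "\<And>i. a i \<in> \<int>" and b: "\<And>i. b i \<in> \<int>"
    and ab: "\<And>i. e i - a i *\<^sub>R e 0 - b i *\<^sub>R f 0 \<in> L"
    by metis
  define D where "D i = a i * b (Suc i) - b i * a (Suc i)" for i
  have D_unit: "D i = 1 \<or> D i = -1" for i
    using det_unit[OF ab ab a b a b, of i] unfolding D_def by linarith
  have "a (Suc i) \<noteq> 0 \<or> b (Suc i) \<noteq> 0" for i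
    using D_unit[of i] by (auto simp: D_def)
  then have D_sign: "D i * D (Suc i) > 0" for i
    unfolding D_def by (rule det_sign[OF ab ab ab])
  have D_Suc: "D (Suc i) = D i" for i
    using D_unit[of i] D_unit[of "Suc i"] D_sign[of i] by auto
  have "e 4 - a 0 *\<^sub>R e 0 - b 0 *\<^sub>R f 0 \<in> L"
    using ab[of 0] period by simp
  then have "a 4 = a 0 \<and> b 4 = b 0"
    using lattice_basis_mod_coords_unique[OF L basis ab] by blast
  then have "a 0 * b 1 - b 0 * a 1 = D 0" "a 1 * b 2 - b 1 * a 2 = D 0"
    "a 2 * b 3 - b 2 * a 3 = D 0" "a 3 * b 0 - b 3 * a 0 = D 0"
    using D_Suc[of 0] D_Suc[of 1] D_Suc[of 2] by (simp_all add: D_def numeral_eq_Suc)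
  moreover have "\<bar>D 0\<bar> = 1"
    using D_unit[of 0] by auto
  ultimately have "a 2 = - a 0 \<and> b 2 = - b 0 \<or> a 3 = - a 1 \<and> b 3 = - b 1"
    by (rule unimodular_cycle_opposite)
  moreover have "e j + e k \<in> L" if "a k = - a j" "b k = - b j" for j k
  proof -
    have "e j + e k = (e j - a j *\<^sub>R e 0 - b j *\<^sub>R f 0) + (e k - a k *\<^sub>R e 0 - b k *\<^sub>R f 0)"
      using that by (simp add: algebra_simps)
    also have "\<dots> \<in> L"
      by (rule subspace_add[OF L ab ab])
    finally show ?thesis .
  qed
  ultimately show ?thesis
    by blast
qed

end

section \<open>Faces of the unit cube\<close>

lemma unit_cube_UNIV: "unit_cube UNIV = {v::real^'d. \<forall>i. 0 \<le> v$i \<and> v$i \<le> 1}"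
  by (auto simp: unit_cube_def)

lemma unit_cube_eq_cbox: "unit_cube UNIV = cbox (0::real^'d) (vec 1)"
  unfolding unit_cube_UNIV by (auto simp: mem_box_cart)

lemma convex_unit_cube: "convex (unit_cube (UNIV::'d::finite set))"
  unfolding unit_cube_eq_cbox by (rule convex_box)

lemma compact_unit_cube: "compact (unit_cube (UNIV::'d::finite set))"
  unfolding unit_cube_eq_cbox by (rule compact_cbox)

definition cube_facet :: "'d \<Rightarrow> real \<Rightarrow> (real^'d::finite) set" where
  "cube_facet k c = {z \<in> unit_cube UNIV. z$k = c}"

definition cube_edge :: "real^'d \<Rightarrow> 'd \<Rightarrow> (real^'d::finite) set" where
  "cube_edge p k = {z \<in> unit_cube UNIV. \<forall>j. j \<noteq> k \<longrightarrow> z$j = p$j}"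

lemma cube_facet_face_of:
  fixes k :: "'d::finite"
  assumes "c = 0 \<or> c = 1"
  shows "cube_facet k c face_of unit_cube UNIV"
proof -
  define n :: "real^'d" where "n = (if c = 0 then - axis k 1 else axis k 1)"
  have "unit_cube UNIV \<inter> {z. n \<bullet> z = c} face_of unit_cube UNIV"
    using assms by (intro face_of_Int_supporting_hyperplane_le[OF convex_unit_cube])
      (auto simp: n_def unit_cube_UNIV inner_axis inner_axis')
  moreover have "unit_cube UNIV \<inter> {z. n \<bullet> z = c} = cube_facet k c"
    using assms by (auto simp: n_def cube_facet_def inner_axis inner_axis')
  ultimately show ?thesis
    by simp
qed

lemma cube_facet_disjoint: "c \<noteq> c' \<Longrightarrow> cube_facet k c \<inter> cube_facet k c' = {}"
  by (auto simp: cube_facet_def)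

definition vec_upd :: "'a^'n \<Rightarrow> 'n \<Rightarrow> 'a \<Rightarrow> 'a^'n" where
  "vec_upd v k t = (\<chi> j. if j = k then t else v$j)"

lemma vec_upd_nth [simp]: "vec_upd v k t $ j = (if j = k then t else v$j)"
  by (simp add: vec_upd_def)

lemma vec_upd_in_unit_cube:
  "v \<in> unit_cube UNIV \<Longrightarrow> 0 \<le> t \<Longrightarrow> t \<le> 1 \<Longrightarrow> vec_upd v k t \<in> unit_cube UNIV"
  by (auto simp: unit_cube_UNIV)

lemma cube_edge_subset_facet: "j \<noteq> k \<Longrightarrow> cube_edge p k \<subseteq> cube_facet j (p$j)"
  by (auto simp: cube_edge_def cube_facet_def)

lemma vec_upd_in_cube_edge:
  "p \<in> unit_cube UNIV \<Longrightarrow> 0 \<le> t \<Longrightarrow> t \<le> 1 \<Longrightarrow> vec_upd p k t \<in> cube_edge p k"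
  by (auto simp: cube_edge_def vec_upd_in_unit_cube)

lemma cube_facet_nonempty:
  assumes "0 \<le> c" "c \<le> 1"
  shows "cube_facet k c \<noteq> {}"
proof -
  have "vec_upd 0 k c \<in> cube_facet k c"
    using assms by (auto simp: cube_facet_def unit_cube_UNIV)
  then show ?thesis
    by blast
qed

lemma cube_facet_Int_nonempty:
  assumes "a \<noteq> b" "0 \<le> \<alpha>" "\<alpha> \<le> 1" "0 \<le> \<beta>" "\<beta> \<le> 1"
  shows "cube_facet a \<alpha> \<inter> cube_facet b \<beta> \<noteq> {}"
proof -
  have "vec_upd (vec_upd 0 a \<alpha>) b \<beta> \<in> cube_facet a \<alpha> \<inter> cube_facet b \<beta>"
    using assms by (auto simp: cube_facet_def unit_cube_UNIV)
  then show ?thesis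
    by blast
qed

lemma open_segment_vec_upd:
  assumes "m \<in> unit_cube UNIV" "0 < m$k" "m$k < 1"
  shows "m \<in> open_segment (vec_upd m k 0) (vec_upd m k 1)"
proof -
  have "m = (1 - m$k) *\<^sub>R vec_upd m k 0 + (m$k) *\<^sub>R vec_upd m k 1"
    by (simp add: vec_eq_iff algebra_simps)
  moreover have "vec_upd m k 0 \<noteq> vec_upd m k (1::real)"
    by (metis vec_upd_nth zero_neq_one)
  ultimately show ?thesis
    using assms(2,3) by (auto simp: in_segment)
qed

lemma vec_upd_in_cube_face:
  assumes G: "G face_of unit_cube UNIV" and m: "m \<in> G" "0 < m$k" "m$k < 1"
    and t: "0 \<le> t" "t \<le> 1"
  shows "vec_upd m k t \<in> G"
proof -
  have mc: "m \<in> unit_cube UNIV"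
    using G m(1) face_of_imp_subset by blast
  have "vec_upd m k 0 \<in> unit_cube UNIV" "vec_upd m k 1 \<in> unit_cube UNIV"
    using mc by (auto intro: vec_upd_in_unit_cube)
  then have "vec_upd m k 0 \<in> G" "vec_upd m k 1 \<in> G"
    using face_ofD[OF G open_segment_vec_upd[OF mc m(2,3)]] m(1) by auto
  moreover have "vec_upd m k t = (1 - t) *\<^sub>R vec_upd m k 0 + t *\<^sub>R vec_upd m k 1"
    by (simp add: vec_eq_iff algebra_simps)
  ultimately show ?thesis
    using convexD[OF face_of_imp_convex[OF G]] t by (metis diff_add_cancel diff_ge_0_iff_ge)
qed

lemma unit_cube_extreme_point_coord:
  assumes "p extreme_point_of unit_cube UNIV"
  shows "p$j = 0 \<or> p$j = 1"
proof (rule ccontr)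
  assume "\<not> (p$j = 0 \<or> p$j = 1)"
  moreover have pc: "p \<in> unit_cube UNIV"
    using assms extreme_point_of_def by blast
  ultimately have "p \<in> open_segment (vec_upd p j 0) (vec_upd p j 1)"
    by (intro open_segment_vec_upd) (auto simp: unit_cube_UNIV less_le)
  then show False
    using assms pc vec_upd_in_unit_cube unfolding extreme_point_of_def by force
qed

text \<open>Otherwise the barycentre of p, q and z, moved in direction k onto the facet through p,
  would be a second point of that facet.\<close>
lemma cube_face_coord_fixed:
  assumes G: "G face_of unit_cube UNIV" and p: "p \<in> G" "\<And>j. p$j = 0 \<or> p$j = 1"
    and q: "q \<in> G" "q$k \<noteq> p$k" and H: "G \<inter> cube_facet k (p$k) = {p}"
    and z: "z \<in> G" and j: "j \<noteq> k"
  shows "z$j = p$j"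
proof (rule ccontr)
  assume zj: "z$j \<noteq> p$j"
  have in_cube: "0 \<le> w$i \<and> w$i \<le> 1" if "w \<in> G" for w i
    using that face_of_imp_subset[OF G] by (auto simp: unit_cube_UNIV)
  define m where "m = (1/3) *\<^sub>R p + (2/3) *\<^sub>R ((1/2) *\<^sub>R q + (1/2) *\<^sub>R z)"
  have "m \<in> G"
    unfolding m_def using face_of_imp_convex[OF G] p(1) q(1) z by (simp add: convexD)
  have mean: "0 < (a + b + c)/3 \<and> (a + b + c)/3 < 1"
    if "a = 0 \<or> a = 1" "0 \<le> b \<and> b \<le> 1" "0 \<le> c \<and> c \<le> 1" "b \<noteq> a \<or> c \<noteq> a" for a b c :: real
    using that by (auto simp: less_le)
  have m_nth: "m$i = (p$i + q$i + z$i) / 3" for i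
    by (simp add: m_def field_simps)
  have strict: "0 < m$i \<and> m$i < 1" if "q$i \<noteq> p$i \<or> z$i \<noteq> p$i" for i
    unfolding m_nth by (rule mean[OF p(2)[of i] in_cube[OF q(1), of i] in_cube[OF z, of i] that])
  have "0 < m$k" "m$k < 1"
    using strict[of k] q(2) by auto
  then have "vec_upd m k (p$k) \<in> G"
    using vec_upd_in_cube_face[OF G \<open>m \<in> G\<close>] p(2)[of k] by auto
  then have "vec_upd m k (p$k) \<in> G \<inter> cube_facet k (p$k)"
    using face_of_imp_subset[OF G] by (auto simp: cube_facet_def)
  then have "m$j = p$j"
    using H j by (metis singletonD vec_upd_nth)
  then show False
    using strict[of j] zj p(2)[of j] by auto
qed

lemma cube_face_eq_cube_edge:
  assumes G: "G face_of unit_cube UNIV" and p: "p \<in> G" "\<And>j. p$j = 0 \<or> p$j = 1"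
    and q: "q \<in> G" "q \<noteq> p"
    and minimal: "\<And>H. H face_of unit_cube UNIV \<Longrightarrow> H \<subset> G \<Longrightarrow> H = {} \<or> (\<exists>r. H = {r})"
  shows "\<exists>k. G = cube_edge p k"
proof -
  obtain k where qk: "q$k \<noteq> p$k"
    using q(2) by (metis vec_eq_iff)
  have Gc: "G \<subseteq> unit_cube UNIV"
    using G face_of_imp_subset by blast
  define H where "H = G \<inter> cube_facet k (p$k)"
  have "H face_of unit_cube UNIV"
    unfolding H_def using G cube_facet_face_of[OF p(2)] by (rule face_of_Int)
  moreover have "H \<subset> G" "p \<in> H"
    using p q qk Gc by (auto simp: H_def cube_facet_def)
  ultimately have "H = {p}"
    using minimal by blast
  note fixed = cube_face_coord_fixed[OF G p q(1) qk this[unfolded H_def]]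
  have "cube_edge p k \<subseteq> G"
  proof
    fix z assume z: "z \<in> cube_edge p k"
    define m where "m = (1/2) *\<^sub>R p + (1/2) *\<^sub>R q"
    have "0 \<le> q$k" "q$k \<le> 1"
      using Gc q(1) by (auto simp: unit_cube_UNIV)
    then have "0 < m$k" "m$k < 1"
      using qk p(2)[of k] by (auto simp: m_def)
    moreover have "m \<in> G"
      unfolding m_def using face_of_imp_convex[OF G] p(1) q(1) by (simp add: convexD)
    moreover have "0 \<le> z$k" "z$k \<le> 1"
      using z by (auto simp: cube_edge_def unit_cube_UNIV)
    ultimately have "vec_upd m k (z$k) \<in> G"
      using vec_upd_in_cube_face[OF G] by blast
    moreover have "vec_upd m k (z$k) = z"
      using z fixed[OF q(1)] by (auto simp: vec_eq_iff m_def cube_edge_def)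
    ultimately show "z \<in> G"
      by simp
  qed
  moreover have "G \<subseteq> cube_edge p k"
    using Gc fixed by (auto simp: cube_edge_def)
  ultimately show ?thesis
    by blast
qed

section \<open>Direction spaces, normals and rays\<close>

lemma subspace_lin_space: "subspace (lin_space F)"
  unfolding lin_space_def by (rule subspace_span)

lemma diff_in_lin_space: "a \<in> F \<Longrightarrow> b \<in> F \<Longrightarrow> a - b \<in> lin_space F"
  unfolding lin_space_def by (rule span_base) blast

lemma lin_space_mono: "F \<subseteq> G \<Longrightarrow> lin_space F \<subseteq> lin_space G"
  unfolding lin_space_def by (rule span_mono) blast

lemma ray_in_lin_space:
  assumes "v \<in> F" "v + t *\<^sub>R u \<in> F" "t \<noteq> 0"
  shows "u \<in> lin_space F"
proof -
  have "(1/t) *\<^sub>R ((v + t *\<^sub>R u) - v) \<in> lin_space F"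
    using assms(1,2) by (intro subspace_scale[OF subspace_lin_space] diff_in_lin_space)
  then show ?thesis
    using assms(3) by simp
qed

lemma lin_space_orthogonal:
  assumes "\<forall>z\<in>F. n \<bullet> z = c" "l \<in> lin_space F"
  shows "n \<bullet> l = 0"
proof -
  have "{u - w | u w. u \<in> F \<and> w \<in> F} \<subseteq> {l. n \<bullet> l = 0}"
    using assms(1) by (auto simp: inner_diff_right)
  then have "lin_space F \<subseteq> {l. n \<bullet> l = 0}"
    unfolding lin_space_def by (rule span_minimal) (rule subspace_hyperplane)
  then show ?thesis
    using assms(2) by blast
qed

lemma exposed_face_ray:
  assumes "C \<subseteq> {z. n \<bullet> z \<le> c}" "G = C \<inter> {z. n \<bullet> z = c}" "v \<in> G" "v + s *\<^sub>R u \<in> C" "s > 0"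
  shows "v + s *\<^sub>R u \<in> G \<Longrightarrow> n \<bullet> u = 0" and "v + s *\<^sub>R u \<notin> G \<Longrightarrow> n \<bullet> u < 0"
proof -
  have "n \<bullet> (v + s *\<^sub>R u) = c + s * (n \<bullet> u)" "n \<bullet> (v + s *\<^sub>R u) \<le> c"
    using assms by (auto simp: inner_add_right)
  then show "v + s *\<^sub>R u \<in> G \<Longrightarrow> n \<bullet> u = 0" and "v + s *\<^sub>R u \<notin> G \<Longrightarrow> n \<bullet> u < 0"
    using assms(2,4,5) by (auto simp: mult_le_0_iff less_le)
qed

lemma extreme_point_collinear_ray:
  assumes v: "v extreme_point_of C" and E: "E \<subseteq> C" "collinear E" "v \<in> E"
    and u: "v + t *\<^sub>R u \<in> E" "t > 0" "u \<noteq> 0" and w: "w \<in> E" "w \<noteq> v"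
  shows "\<exists>s>0. w = v + s *\<^sub>R u"
proof -
  obtain d where d: "\<forall>x\<in>E. \<forall>y\<in>E. \<exists>c. x - y = c *\<^sub>R d"
    using E(2) unfolding collinear_def by blast
  obtain c1 c2 where c1: "t *\<^sub>R u = c1 *\<^sub>R d" and c2: "w - v = c2 *\<^sub>R d"
    using d u(1) w(1) E(3) by (metis add_diff_cancel_left')
  have "c1 \<noteq> 0"
    using c1 u(2,3) by auto
  define s where "s = c2 * t / c1"
  have ws: "w = v + s *\<^sub>R u"
  proof -
    have "s *\<^sub>R u = (c2 / c1) *\<^sub>R (t *\<^sub>R u)"
      by (simp add: s_def)
    also have "\<dots> = w - v"
      using c1 c2 \<open>c1 \<noteq> 0\<close> by simp
    finally show ?thesis
      by simp
  qed
  have "\<not> s < 0"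
  proof
    assume "s < 0"
    define \<theta> where "\<theta> = - s / (t - s)"
    have \<theta>: "0 < \<theta>" "\<theta> < 1"
      using \<open>s < 0\<close> u(2) by (auto simp: \<theta>_def field_simps)
    have "(1 - \<theta>) * s + \<theta> * t = 0"
      using \<open>s < 0\<close> u(2) by (simp add: \<theta>_def field_simps)
    then have "v = (1 - \<theta>) *\<^sub>R w + \<theta> *\<^sub>R (v + t *\<^sub>R u)"
      unfolding ws by (simp add: algebra_simps flip: scaleR_add_left)
    moreover have "w \<noteq> v + t *\<^sub>R u"
      using ws \<open>s < 0\<close> u(2,3) by auto
    ultimately have "v \<in> open_segment w (v + t *\<^sub>R u)"
      using \<theta> by (auto simp: in_segment)
    then show False
      using v E(1) u(1) w(1) unfolding extreme_point_of_def by blast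
  qed
  moreover have "s \<noteq> 0"
    using ws w(2) by auto
  ultimately show ?thesis
    using ws by (metis linorder_neqE_linordered_idom)
qed

lemma independent_collinear_eq:
  assumes B: "independent B" "u \<in> B" "u' \<in> B" and E: "collinear E" "v \<in> E"
    and rays: "v + t *\<^sub>R u \<in> E" "v + t' *\<^sub>R u' \<in> E" "t > 0" "t' > 0"
  shows "u = u'"
proof (rule ccontr)
  assume "u \<noteq> u'"
  obtain d where d: "\<forall>x\<in>E. \<forall>y\<in>E. \<exists>c. x - y = c *\<^sub>R d"
    using E(1) unfolding collinear_def by blast
  obtain c1 c2 where c1: "t *\<^sub>R u = c1 *\<^sub>R d" and c2: "t' *\<^sub>R u' = c2 *\<^sub>R d"
    using d rays(1,2) E(2) by (metis add_diff_cancel_left')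
  have "u \<noteq> 0"
    using B(1,2) dependent_zero by blast
  then have "c1 \<noteq> 0"
    using c1 rays(3) by auto
  have "(c2 * t / (c1 * t')) *\<^sub>R u = (c2 / (c1 * t')) *\<^sub>R (t *\<^sub>R u)"
    by simp
  also have "\<dots> = (1 / t') *\<^sub>R (t' *\<^sub>R u')"
    using c1 c2 \<open>c1 \<noteq> 0\<close> by simp
  also have "\<dots> = u'"
    using rays(4) by simp
  finally have "u' = (c2 * t / (c1 * t')) *\<^sub>R u" ..
  then have "u' \<in> span (B - {u'})"
    using \<open>u \<noteq> u'\<close> B(2) by (simp add: span_base span_scale)
  then show False
    using B(1,3) unfolding dependent_def by blast
qed

lemma adjacent_rays_in_lin_space:
  assumes "lin_space F = L" "lin_space G = L" "v \<in> F" "w \<in> G" "v + s *\<^sub>R e \<in> G" "w + t *\<^sub>R f \<in> F"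
  shows "s *\<^sub>R e + t *\<^sub>R f \<in> L"
proof -
  have "s *\<^sub>R e + t *\<^sub>R f = ((v + s *\<^sub>R e) - w) + ((w + t *\<^sub>R f) - v)"
    by simp
  also have "\<dots> \<in> L"
    using assms by (metis diff_in_lin_space subspace_add subspace_lin_space)
  finally show ?thesis .
qed

lemma lin_space_eq_line_mod:
  assumes L: "subspace L" "L \<subseteq> lin_space G" and e: "e \<in> lin_space G"
    and ef: "lattice_basis_mod L e f"
    and n: "\<forall>z\<in>G. n \<bullet> z = c" "n \<bullet> f \<noteq> 0" "\<And>l. l \<in> L \<Longrightarrow> n \<bullet> l = 0"
  shows "lin_space G = {w. \<exists>a. w - a *\<^sub>R e \<in> L}"
proof
  show "lin_space G \<subseteq> {w. \<exists>a. w - a *\<^sub>R e \<in> L}"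
  proof
    fix w assume w: "w \<in> lin_space G"
    obtain a b where ab: "w - a *\<^sub>R e - b *\<^sub>R f \<in> L"
      using lattice_basis_mod_span[OF L(1) ef] by blast
    have "n \<bullet> w = 0" "n \<bullet> e = 0"
      using lin_space_orthogonal[OF n(1)] w e by auto
    then have "b * (n \<bullet> f) = 0"
      using n(3)[OF ab] by (simp add: inner_diff_right)
    then show "w \<in> {w. \<exists>a. w - a *\<^sub>R e \<in> L}"
      using ab n(2) by auto
  qed
  show "{w. \<exists>a. w - a *\<^sub>R e \<in> L} \<subseteq> lin_space G"
  proof
    fix w assume "w \<in> {w. \<exists>a. w - a *\<^sub>R e \<in> L}"
    then obtain a where "w - a *\<^sub>R e \<in> lin_space G"
      using L(2) by blast
    then have "(w - a *\<^sub>R e) + a *\<^sub>R e \<in> lin_space G"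
      using e by (intro subspace_add[OF subspace_lin_space] subspace_scale[OF subspace_lin_space])
    then show "w \<in> lin_space G"
      by simp
  qed
qed

lemma line_mod_eq_opposite:
  assumes L: "subspace L" and "e + e' \<in> L"
  shows "{w. \<exists>a. w - a *\<^sub>R e \<in> L} = {w. \<exists>a. w - a *\<^sub>R e' \<in> L}"
proof -
  have swap: "\<exists>a'. w - a' *\<^sub>R q \<in> L" if "w - a *\<^sub>R p \<in> L" "p + q \<in> L" for w a p q
  proof -
    have "w - (- a) *\<^sub>R q = (w - a *\<^sub>R p) + a *\<^sub>R (p + q)"
      by (simp add: algebra_simps)
    then show ?thesis
      using that L by (metis subspace_add subspace_scale)
  qed
  show ?thesis
    using swap[OF _ assms(2)] swap[OF _ assms(2)[unfolded add.commute[of e]]] by blast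
qed

section \<open>The ridges around a square of the cube\<close>

text \<open>Ridge i is F_{xy}, F_{x\bar y}, F_{\bar x\bar y}, F_{\bar x y} and side i is the facet F_x,
  F_{\bar y}, F_{\bar x}, F_y for i mod 4 = 0, 1, 2, 3; side i contains ridges i and i + 1.\<close>

definition square_ridge :: "'d \<Rightarrow> 'd \<Rightarrow> nat \<Rightarrow> (real^'d::finite) set" where
  "square_ridge x y i =
     cube_facet x (if i mod 4 \<in> {2, 3} then 1 else 0) \<inter>
     cube_facet y (if i mod 4 \<in> {1, 2} then 1 else 0)"

definition square_side :: "'d \<Rightarrow> 'd \<Rightarrow> nat \<Rightarrow> (real^'d::finite) set" where
  "square_side x y i =
     (if i mod 4 = 0 then cube_facet x 0 else if i mod 4 = 1 then cube_facet y 1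
      else if i mod 4 = 2 then cube_facet x 1 else cube_facet y 0)"

lemma mod_4_cases:
  fixes i :: nat
  obtains "i mod 4 = 0" "Suc i mod 4 = 1" "(i + 2) mod 4 = 2" "(i + 3) mod 4 = 3"
    | "i mod 4 = 1" "Suc i mod 4 = 2" "(i + 2) mod 4 = 3" "(i + 3) mod 4 = 0"
    | "i mod 4 = 2" "Suc i mod 4 = 3" "(i + 2) mod 4 = 0" "(i + 3) mod 4 = 1"
    | "i mod 4 = 3" "Suc i mod 4 = 0" "(i + 2) mod 4 = 1" "(i + 3) mod 4 = 2"
proof -
  have shift: "(i + k) mod 4 = (i mod 4 + k) mod 4" for k
    by (simp add: mod_add_left_eq)
  have "i mod 4 < 4"
    by simp
  then consider "i mod 4 = 0" | "i mod 4 = 1" | "i mod 4 = 2" | "i mod 4 = 3"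
    by linarith
  then show ?thesis
    using that shift[of 1] shift[of 2] shift[of 3] by cases simp_all
qed

lemma square_ridge_face_of: "square_ridge x y i face_of unit_cube UNIV"
  unfolding square_ridge_def by (intro face_of_Int cube_facet_face_of) auto

lemma square_side_face_of: "square_side x y i face_of unit_cube UNIV"
  unfolding square_side_def by (auto intro: cube_facet_face_of)

lemma square_ridge_mod: "i mod 4 = j mod 4 \<Longrightarrow> square_ridge x y i = square_ridge x y j"
  by (simp add: square_ridge_def)

lemma square_ridge_subset_side:
  "square_ridge x y i \<subseteq> square_side x y i" "square_ridge x y (Suc i) \<subseteq> square_side x y i"
  by (cases i rule: mod_4_cases; auto simp: square_ridge_def square_side_def)+

lemma square_ridge_disjoint_side:
  assumes "x \<noteq> y"
  shows "square_ridge x y (i + 2) \<inter> square_side x y i = {}"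
    and "square_ridge x y (i + 3) \<inter> square_side x y i = {}"
  by (cases i rule: mod_4_cases; auto simp: square_ridge_def square_side_def cube_facet_def)+

lemma square_corner:
  assumes "x \<noteq> y"
  obtains a b \<alpha> \<beta> where "a \<noteq> b" "\<alpha> = 0 \<or> \<alpha> = 1" "\<beta> = 0 \<or> \<beta> = 1"
    "square_ridge x y i = cube_facet a \<alpha> \<inter> cube_facet b \<beta>"
    "square_ridge x y (Suc i) = cube_facet a (1 - \<alpha>) \<inter> cube_facet b \<beta>"
    "square_ridge x y (i + 3) = cube_facet a \<alpha> \<inter> cube_facet b (1 - \<beta>)"
proof (cases i rule: mod_4_cases)
  case 1
  then show ?thesis
    using that[of y x 0 0] assms by (simp add: square_ridge_def Int_commute)
next
  case 2
  then show ?thesis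
    using that[of x y 0 1] assms by (simp add: square_ridge_def)
next
  case 3
  then show ?thesis
    using that[of y x 1 1] assms by (simp add: square_ridge_def Int_commute)
next
  case 4
  then show ?thesis
    using that[of x y 1 0] assms by (simp add: square_ridge_def)
qed

lemma square_ridge_cases:
  "square_ridge x y i \<in>
    {square_ridge x y 0, square_ridge x y 1, square_ridge x y 2, square_ridge x y 3}"
  by (cases i rule: mod_4_cases) (simp_all add: square_ridge_def)

lemma cube_face_square:
  assumes "x \<noteq> y"
  shows "cube_face {x, y} {} = square_ridge x y 0" "cube_face {x} {y} = square_ridge x y 1"
    "cube_face {} {x, y} = square_ridge x y 2" "cube_face {y} {x} = square_ridge x y 3"
    "cube_face {x} {} = square_side x y 0" "cube_face {} {y} = square_side x y 1"
    "cube_face {} {x} = square_side x y 2" "cube_face {y} {} = square_side x y 3"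
  using assms by (auto simp: cube_face_def square_ridge_def square_side_def cube_facet_def)

section \<open>Smooth cubes with labelled faces\<close>

locale labelled_cube =
  fixes C :: "(real^'d::finite) set" and \<phi> :: "(real^'d) set \<Rightarrow> (real^'d) set"
  assumes smooth: "smooth_polytope UNIV C" and iso: "face_poset_iso UNIV C \<phi>"
begin

text \<open>The face of C labelled by the cube face K; thus lab_face C \<phi> I J = \<psi> (cube_face I J).\<close>

definition \<psi> :: "(real^'d) set \<Rightarrow> (real^'d) set" where
  "\<psi> K = inv_into {F. F face_of C} \<phi> K"

lemma polytope_C: "polytope C"
  using smooth unfolding smooth_polytope_def lattice_polytope_def
  by (auto intro: polytope_convex_hull)

lemma vertex_lattice_basis: "v extreme_point_of C \<Longrightarrow> lattice_basis UNIV (prim_edge_dirs C v)"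
  using smooth unfolding smooth_polytope_def by simp

lemma \<phi>_face: "F face_of C \<Longrightarrow> \<phi> F face_of unit_cube UNIV"
  using iso unfolding face_poset_iso_def by (auto dest: bij_betw_apply)

lemma \<psi>_face:
  assumes "K face_of unit_cube UNIV"
  shows "\<psi> K face_of C" and "\<phi> (\<psi> K) = K"
proof -
  have K: "K \<in> \<phi> ` {F. F face_of C}"
    using iso assms unfolding face_poset_iso_def bij_betw_def by auto
  show "\<psi> K face_of C" "\<phi> (\<psi> K) = K"
    unfolding \<psi>_def using inv_into_into[OF K] f_inv_into_f[OF K] by simp_all
qed

lemma \<phi>_subset_iff: "F face_of C \<Longrightarrow> G face_of C \<Longrightarrow> \<phi> F \<subseteq> \<phi> G \<longleftrightarrow> F \<subseteq> G"
  using iso unfolding face_poset_iso_def by blast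

lemma \<phi>_inj:
  assumes "F face_of C" "G face_of C" "\<phi> F = \<phi> G"
  shows "F = G"
  using \<phi>_subset_iff[OF assms(1,2)] \<phi>_subset_iff[OF assms(2,1)] assms(3) by blast

lemma \<phi>_empty: "\<phi> {} = {}"
proof -
  obtain H where "H face_of C" "\<phi> H = {}"
    using \<psi>_face[OF empty_face_of] by blast
  then show ?thesis
    using \<phi>_subset_iff[OF empty_face_of] by blast
qed

lemma \<phi>_eq_empty_iff: "F face_of C \<Longrightarrow> \<phi> F = {} \<longleftrightarrow> F = {}"
  using \<phi>_inj[of F "{}"] \<phi>_empty by auto

lemma \<phi>_Int:
  assumes F: "F face_of C" and G: "G face_of C"
  shows "\<phi> (F \<inter> G) = \<phi> F \<inter> \<phi> G"
proof -
  have FG: "F \<inter> G face_of C"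
    using F G by (rule face_of_Int)
  obtain H where H: "H face_of C" "\<phi> H = \<phi> F \<inter> \<phi> G"
    using \<psi>_face[OF face_of_Int[OF \<phi>_face[OF F] \<phi>_face[OF G]]] by blast
  then have "H \<subseteq> F" "H \<subseteq> G"
    using \<phi>_subset_iff[OF H(1) F] \<phi>_subset_iff[OF H(1) G] by auto
  then have "\<phi> H \<subseteq> \<phi> (F \<inter> G)"
    using \<phi>_subset_iff[OF H(1) FG] by simp
  moreover have "\<phi> (F \<inter> G) \<subseteq> \<phi> F" "\<phi> (F \<inter> G) \<subseteq> \<phi> G"
    using \<phi>_subset_iff[OF FG F] \<phi>_subset_iff[OF FG G] by auto
  ultimately show ?thesis
    using H(2) by blast
qed

lemma \<psi>_mono:
  assumes "K face_of unit_cube UNIV" "K' face_of unit_cube UNIV" "K \<subseteq> K'"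
  shows "\<psi> K \<subseteq> \<psi> K'"
  using \<phi>_subset_iff[OF \<psi>_face(1)[OF assms(1)] \<psi>_face(1)[OF assms(2)]] assms
  by (simp add: \<psi>_face(2))

lemma \<psi>_disjoint:
  assumes "K face_of unit_cube UNIV" "K' face_of unit_cube UNIV" "K \<inter> K' = {}"
  shows "\<psi> K \<inter> \<psi> K' = {}"
proof -
  have "\<phi> (\<psi> K \<inter> \<psi> K') = {}"
    using \<phi>_Int[OF \<psi>_face(1)[OF assms(1)] \<psi>_face(1)[OF assms(2)]] assms by (simp add: \<psi>_face(2))
  then show ?thesis
    using \<phi>_eq_empty_iff[OF face_of_Int[OF \<psi>_face(1)[OF assms(1)] \<psi>_face(1)[OF assms(2)]]] by simp
qed

lemma \<psi>_nonempty:
  assumes "K face_of unit_cube UNIV" "K \<noteq> {}"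
  shows "\<psi> K \<noteq> {}"
  using \<psi>_face(2)[OF assms(1)] \<phi>_empty assms(2) by auto

definition vertex_label :: "real^'d \<Rightarrow> real^'d" where
  "vertex_label v = the_elem (\<phi> {v})"

lemma \<phi>_vertex:
  assumes v: "v extreme_point_of C"
  shows "\<phi> {v} = {vertex_label v}"
proof -
  have V: "{v} face_of C"
    using v by (simp add: face_of_singleton)
  have Vf: "\<phi> {v} face_of unit_cube UNIV"
    by (rule \<phi>_face[OF V])
  have "\<phi> {v} \<noteq> {}"
    using \<phi>_eq_empty_iff[OF V] by simp
  then obtain p where p: "p extreme_point_of \<phi> {v}"
    using extreme_point_exists_convex
        [OF face_of_imp_compact[OF convex_unit_cube compact_unit_cube Vf]
        face_of_imp_convex[OF Vf]] by blast
  then have "{p} face_of \<phi> {v}"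
    by (simp add: face_of_singleton)
  then have "{p} face_of unit_cube UNIV"
    using Vf by (rule face_of_trans)
  then obtain H where H: "H face_of C" "\<phi> H = {p}"
    using \<psi>_face by blast
  have "p \<in> \<phi> {v}"
    using p by (simp add: extreme_point_of_def)
  then have "H \<subseteq> {v}"
    using \<phi>_subset_iff[OF H(1) V] H(2) by simp
  moreover have "H \<noteq> {}"
    using H \<phi>_empty by auto
  ultimately have "H = {v}"
    by blast
  then have "\<phi> {v} = {p}"
    using H(2) by simp
  then show ?thesis
    by (simp add: vertex_label_def)
qed

lemma vertex_label_extreme:
  assumes "v extreme_point_of C"
  shows "vertex_label v extreme_point_of unit_cube UNIV"
proof -
  have "{v} face_of C"
    using assms by (simp add: face_of_singleton)
  then have "{vertex_label v} face_of unit_cube UNIV"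
    using \<phi>_face \<phi>_vertex[OF assms] by metis
  then show ?thesis
    by (simp add: face_of_singleton)
qed

lemma vertex_label_coord:
  "v extreme_point_of C \<Longrightarrow> vertex_label v $ j = 0 \<or> vertex_label v $ j = 1"
  using unit_cube_extreme_point_coord vertex_label_extreme by blast

lemma vertex_in_\<psi>_iff:
  assumes "v extreme_point_of C" "K face_of unit_cube UNIV"
  shows "v \<in> \<psi> K \<longleftrightarrow> vertex_label v \<in> K"
  using \<phi>_subset_iff[of "{v}" "\<psi> K"] \<psi>_face[OF assms(2)] \<phi>_vertex[OF assms(1)] assms(1)
    face_of_singleton by auto

lemma \<phi>_subface_of_edge:
  assumes E: "E face_of C" "aff_dim E = 1"
    and H: "H face_of unit_cube UNIV" "H \<subset> \<phi> E"
  shows "H = {} \<or> (\<exists>r. H = {r})"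
proof -
  have "\<psi> H \<subset> E"
    using \<phi>_subset_iff[OF \<psi>_face(1)[OF H(1)] E(1)] \<psi>_face(2)[OF H(1)] H(2) by blast
  moreover have "\<psi> H face_of E"
    using face_of_face[OF E(1)] \<psi>_face(1)[OF H(1)] \<open>\<psi> H \<subset> E\<close> by blast
  ultimately have "aff_dim (\<psi> H) < aff_dim E"
    using face_of_aff_dim_lt[OF face_of_imp_convex[OF E(1)]] by blast
  then have "aff_dim (\<psi> H) = -1 \<or> aff_dim (\<psi> H) = 0"
    using E(2) aff_dim_geq[of "\<psi> H"] by linarith
  then have "\<psi> H = {} \<or> (\<exists>w. \<psi> H = {w})"
    using aff_dim_eq_0[of "\<psi> H"] aff_dim_empty[of "\<psi> H"] by auto
  then show ?thesis
  proof
    assume "\<psi> H = {}"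
    then show ?thesis
      using \<psi>_face(2)[OF H(1)] \<phi>_empty by simp
  next
    assume "\<exists>w. \<psi> H = {w}"
    then obtain w where w: "\<psi> H = {w}" ..
    then have "w extreme_point_of C"
      using \<psi>_face(1)[OF H(1)] by (simp add: face_of_singleton)
    then show ?thesis
      using \<phi>_vertex \<psi>_face(2)[OF H(1)] w by auto
  qed
qed

lemma \<phi>_edge:
  assumes v: "v extreme_point_of C" and E: "E \<in> edges_at C v"
  shows "\<exists>k. \<phi> E = cube_edge (vertex_label v) k"
proof -
  have Ef: "E face_of C" and Ed: "aff_dim E = 1" and vE: "v \<in> E"
    using E unfolding edges_at_def by auto
  have V: "{v} face_of C"
    using v face_of_singleton by blast
  have "vertex_label v \<in> \<phi> E"
    using \<phi>_subset_iff[OF V Ef] vE \<phi>_vertex[OF v] by blast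
  moreover have "\<phi> E \<noteq> {vertex_label v}"
  proof
    assume "\<phi> E = {vertex_label v}"
    then have "E = {v}"
      using \<phi>_inj[OF Ef V] \<phi>_vertex[OF v] by simp
    then show False
      using Ed by simp
  qed
  ultimately obtain q where "q \<in> \<phi> E" "q \<noteq> vertex_label v"
    by blast
  then show ?thesis
    using cube_face_eq_cube_edge[OF \<phi>_face[OF Ef] \<open>vertex_label v \<in> \<phi> E\<close> vertex_label_coord[OF v]]
      \<phi>_subface_of_edge[OF Ef Ed] by blast
qed

lemma \<psi>_normal:
  assumes "K face_of unit_cube UNIV"
  obtains n d where "C \<subseteq> {z. n \<bullet> z \<le> d}" "\<psi> K = C \<inter> {z. n \<bullet> z = d}"
proof -
  have "\<psi> K exposed_face_of C"
    using exposed_face_of_polyhedron[OF polytope_imp_polyhedron[OF polytope_C]] \<psi>_face(1)[OF assms]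
    by simp
  then show ?thesis
    using that unfolding exposed_face_of_def by blast
qed

lemma ray_normal_sign:
  assumes n: "C \<subseteq> {z. n \<bullet> z \<le> d}" "\<psi> K = C \<inter> {z. n \<bullet> z = d}"
    and K: "K face_of unit_cube UNIV" "K' face_of unit_cube UNIV"
    and ray: "v \<in> \<psi> K" "s > 0" "v + s *\<^sub>R u \<in> \<psi> K'"
  shows "K' \<subseteq> K \<Longrightarrow> n \<bullet> u = 0" and "K' \<inter> K = {} \<Longrightarrow> n \<bullet> u < 0"
proof -
  have "v + s *\<^sub>R u \<in> C"
    using ray(3) face_of_imp_subset[OF \<psi>_face(1)[OF K(2)]] by blast
  note sign = exposed_face_ray[OF n ray(1) this ray(2)]
  show "K' \<subseteq> K \<Longrightarrow> n \<bullet> u = 0"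
    using sign(1) \<psi>_mono[OF K(2,1)] ray(3) by blast
  show "K' \<inter> K = {} \<Longrightarrow> n \<bullet> u < 0"
    using sign(2) \<psi>_disjoint[OF K(2,1)] ray(3) by blast
qed

definition edge_along :: "real^'d \<Rightarrow> real^'d \<Rightarrow> 'd \<Rightarrow> bool" where
  "edge_along v u k \<longleftrightarrow>
     (\<exists>E\<in>edges_at C v. (\<exists>t>0. v + t *\<^sub>R u \<in> E) \<and> \<phi> E = cube_edge (vertex_label v) k)"

lemma prim_edge_dir_along:
  assumes "v extreme_point_of C" "u \<in> prim_edge_dirs C v"
  obtains k where "edge_along v u k"
proof -
  obtain E t where E: "E \<in> edges_at C v" "t > 0" "v + t *\<^sub>R u \<in> E"
    using assms(2) unfolding prim_edge_dirs_def by blast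
  moreover obtain k where "\<phi> E = cube_edge (vertex_label v) k"
    using \<phi>_edge[OF assms(1) E(1)] by blast
  ultimately show ?thesis
    using that unfolding edge_along_def by blast
qed

lemma edge_along_unique:
  assumes v: "v extreme_point_of C" and u: "u \<in> prim_edge_dirs C v" "u' \<in> prim_edge_dirs C v"
    and "edge_along v u k" "edge_along v u' k"
  shows "u = u'"
proof -
  obtain E t where E: "E \<in> edges_at C v" "t > 0" "v + t *\<^sub>R u \<in> E"
    and "\<phi> E = cube_edge (vertex_label v) k"
    using assms(4) unfolding edge_along_def by blast
  moreover obtain E' t' where E': "E' \<in> edges_at C v" "t' > 0" "v + t' *\<^sub>R u' \<in> E'"
    and "\<phi> E' = cube_edge (vertex_label v) k"
    using assms(5) unfolding edge_along_def by blast
  ultimately have "E' = E"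
    using \<phi>_inj[of E' E] E(1) E'(1) unfolding edges_at_def by auto
  moreover have "independent (prim_edge_dirs C v)"
    using vertex_lattice_basis[OF v] unfolding lattice_basis_def by blast
  moreover have "collinear E" "v \<in> E"
    using E(1) unfolding edges_at_def by (auto simp: collinear_aff_dim)
  ultimately show ?thesis
    using independent_collinear_eq u E E' by blast
qed

lemma edge_along_into_face:
  assumes v: "v extreme_point_of C" and "edge_along v u k"
    and K: "K face_of unit_cube UNIV" "cube_edge (vertex_label v) k \<subseteq> K"
  shows "\<exists>t>0. v + t *\<^sub>R u \<in> \<psi> K"
proof -
  obtain E t where E: "E face_of C" "t > 0" "v + t *\<^sub>R u \<in> E" "\<phi> E = cube_edge (vertex_label v) k"
    using assms(2) unfolding edge_along_def edges_at_def by blast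
  then have "E \<subseteq> \<psi> K"
    using \<phi>_subset_iff[OF E(1) \<psi>_face(1)[OF K(1)]] \<psi>_face(2)[OF K(1)] K(2) by simp
  then show ?thesis
    using E(2,3) by blast
qed

lemma edge_along_reaches_face:
  assumes v: "v extreme_point_of C" and "edge_along v u k" "u \<noteq> 0"
    and K: "K face_of unit_cube UNIV" "cube_edge (vertex_label v) k \<inter> K \<noteq> {}" "vertex_label v \<notin> K"
  shows "\<exists>s>0. v + s *\<^sub>R u \<in> \<psi> K"
proof -
  obtain E t where E: "E \<in> edges_at C v" "t > 0" "v + t *\<^sub>R u \<in> E"
    and \<phi>E: "\<phi> E = cube_edge (vertex_label v) k"
    using assms(2) unfolding edge_along_def by blast
  have Ef: "E face_of C" and "collinear E" "v \<in> E"
    using E(1) unfolding edges_at_def by (auto simp: collinear_aff_dim)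
  have "\<phi> (E \<inter> \<psi> K) \<noteq> {}"
    using \<phi>_Int[OF Ef \<psi>_face(1)[OF K(1)]] \<psi>_face(2)[OF K(1)] \<phi>E K(2) by simp
  then have "E \<inter> \<psi> K \<noteq> {}"
    using \<phi>_empty by auto
  then obtain w where w: "w \<in> E" "w \<in> \<psi> K"
    by blast
  moreover have "w \<noteq> v"
    using w(2) vertex_in_\<psi>_iff[OF v K(1)] K(3) by blast
  ultimately obtain s where "s > 0" "w = v + s *\<^sub>R u"
    using extreme_point_collinear_ray[OF v face_of_imp_subset[OF Ef] \<open>collinear E\<close> \<open>v \<in> E\<close>
        E(3,2) assms(3)] by blast
  then show ?thesis
    using w(2) by blast
qed

lemma edge_along_lin_space:
  assumes v: "v extreme_point_of C" "v \<in> \<psi> K" and K: "K face_of unit_cube UNIV"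
    and "edge_along v u k" "cube_edge (vertex_label v) k \<subseteq> K"
  shows "u \<in> lin_space (\<psi> K)"
proof -
  obtain t where "t > 0" "v + t *\<^sub>R u \<in> \<psi> K"
    using edge_along_into_face[OF v(1) assms(4) K assms(5)] by blast
  then show ?thesis
    using ray_in_lin_space[OF v(2)] by simp
qed

lemma edge_along_facet_normal:
  assumes v: "v extreme_point_of C" and u: "u \<in> prim_edge_dirs C v" "edge_along v u k"
    and n: "C \<subseteq> {z. n \<bullet> z \<le> d}" "\<psi> (cube_facet j (vertex_label v $ j)) = C \<inter> {z. n \<bullet> z = d}"
  shows "k \<noteq> j \<Longrightarrow> n \<bullet> u = 0" and "k = j \<Longrightarrow> n \<bullet> u < 0"
proof -
  define p where "p = vertex_label v"
  have c: "p$j = 0 \<or> p$j = 1" "1 - p$j = 0 \<or> 1 - p$j = 1"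
    using vertex_label_coord[OF v] by (auto simp: p_def)
  have p: "p \<in> unit_cube UNIV"
    using vertex_label_extreme[OF v] by (simp add: p_def extreme_point_of_def)
  note facet = cube_facet_face_of[OF c(1), of j] and opposite = cube_facet_face_of[OF c(2), of j]
  have v_in: "v \<in> \<psi> (cube_facet j (p$j))"
    using vertex_in_\<psi>_iff[OF v facet] p by (simp add: p_def cube_facet_def)
  show "n \<bullet> u = 0" if "k \<noteq> j"
  proof -
    have "cube_edge p k \<subseteq> cube_facet j (p$j)"
      using that by (intro cube_edge_subset_facet) auto
    then obtain t where "t > 0" "v + t *\<^sub>R u \<in> \<psi> (cube_facet j (p$j))"
      using edge_along_into_face[OF v u(2) facet] by (auto simp: p_def)
    then show ?thesis
      using ray_normal_sign(1)[OF n[folded p_def] facet facet v_in] by blast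
  qed
  show "n \<bullet> u < 0" if "k = j"
  proof -
    have "vec_upd p j (1 - p$j) \<in> cube_edge p k \<inter> cube_facet j (1 - p$j)"
      using vec_upd_in_cube_edge[OF p] vec_upd_in_unit_cube[OF p] c(1) that
      by (auto simp: cube_facet_def)
    moreover have "p \<notin> cube_facet j (1 - p$j)"
      using c(1) by (auto simp: cube_facet_def)
    moreover have "u \<noteq> 0"
      using u(1) by (simp add: prim_edge_dirs_def)
    ultimately obtain s where "s > 0" "v + s *\<^sub>R u \<in> \<psi> (cube_facet j (1 - p$j))"
      using edge_along_reaches_face[OF v u(2) _ opposite] by (auto simp: p_def)
    moreover have "cube_facet j (1 - p$j) \<inter> cube_facet j (p$j) = {}"
      using c(1) by (intro cube_facet_disjoint) auto
    ultimately show ?thesis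
      using ray_normal_sign(2)[OF n[folded p_def] facet opposite v_in] by blast
  qed
qed

text \<open>Otherwise all edges at v stay in one facet through v, whose normal then vanishes on a
  lattice basis.\<close>
lemma edge_along_exists:
  assumes v: "v extreme_point_of C"
  shows "\<exists>u\<in>prim_edge_dirs C v. edge_along v u k"
proof (rule ccontr)
  assume none: "\<not> (\<exists>u\<in>prim_edge_dirs C v. edge_along v u k)"
  define c where "c = vertex_label v $ k"
  have c: "c = 0 \<or> c = 1" "1 - c = 0 \<or> 1 - c = 1"
    using vertex_label_coord[OF v] by (auto simp: c_def)
  note facet = cube_facet_face_of[OF c(1)]
  obtain n d where n: "C \<subseteq> {z. n \<bullet> z \<le> d}" "\<psi> (cube_facet k c) = C \<inter> {z. n \<bullet> z = d}"
    using \<psi>_normal[OF facet] by blast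
  have v_in: "v \<in> \<psi> (cube_facet k c)"
    using vertex_in_\<psi>_iff[OF v facet] vertex_label_extreme[OF v]
    by (simp add: c_def cube_facet_def extreme_point_of_def)
  have "n \<bullet> u = 0" if u: "u \<in> prim_edge_dirs C v" for u
  proof -
    obtain k' where "edge_along v u k'"
      using prim_edge_dir_along[OF v u] .
    moreover have "k' \<noteq> k"
      using none u calculation by blast
    ultimately show ?thesis
      using edge_along_facet_normal(1)[OF v u _ n[unfolded c_def]] by blast
  qed
  then have "span (prim_edge_dirs C v) \<subseteq> {w. n \<bullet> w = 0}"
    by (intro span_minimal subspace_hyperplane) auto
  then have n0: "n \<bullet> w = 0" for w
    using span_lattice_basis[OF vertex_lattice_basis[OF v]] by auto
  have "n \<bullet> z = d" if "z \<in> C" for z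
    using n0[of "z - v"] v_in n(2) by (auto simp: inner_diff_right)
  then have "C \<subseteq> \<psi> (cube_facet k c)"
    using n(2) by auto
  moreover have "\<psi> (cube_facet k (1 - c)) \<subseteq> C" "\<psi> (cube_facet k (1 - c)) \<noteq> {}"
  proof -
    have "cube_facet k (1 - c) \<noteq> {}"
      using c(1) by (intro cube_facet_nonempty) auto
    then show "\<psi> (cube_facet k (1 - c)) \<subseteq> C" "\<psi> (cube_facet k (1 - c)) \<noteq> {}"
      using face_of_imp_subset[OF \<psi>_face(1)] \<psi>_nonempty cube_facet_face_of[OF c(2)] by auto
  qed
  moreover have "\<psi> (cube_facet k (1 - c)) \<inter> \<psi> (cube_facet k c) = {}"
    using c(1) by (intro \<psi>_disjoint[OF cube_facet_face_of[OF c(2)] facet] cube_facet_disjoint) auto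
  ultimately show False
    by blast
qed

lemma edge_along_adjacent_ridge:
  assumes ab: "a \<noteq> b" and \<alpha>: "\<alpha> = 0 \<or> \<alpha> = 1" and \<beta>: "\<beta> = 0 \<or> \<beta> = 1"
    and v: "v extreme_point_of C" "v \<in> \<psi> (cube_facet a \<alpha> \<inter> cube_facet b \<beta>)"
    and e: "e \<in> prim_edge_dirs C v" "edge_along v e a"
  shows "\<exists>s>0. v + s *\<^sub>R e \<in> \<psi> (cube_facet a (1 - \<alpha>) \<inter> cube_facet b \<beta>)"
proof -
  define p where "p = vertex_label v"
  have faces: "cube_facet a \<alpha> \<inter> cube_facet b \<beta> face_of unit_cube UNIV"
    "cube_facet a (1 - \<alpha>) \<inter> cube_facet b \<beta> face_of unit_cube UNIV"
    using \<alpha> \<beta> by (auto intro!: face_of_Int cube_facet_face_of)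
  have p: "p \<in> cube_facet a \<alpha> \<inter> cube_facet b \<beta>"
    using vertex_in_\<psi>_iff[OF v(1) faces(1)] v(2) by (simp add: p_def)
  then have "p \<in> unit_cube UNIV"
    by (simp add: cube_facet_def)
  then have "vec_upd p a (1 - \<alpha>) \<in> cube_edge p a" "vec_upd p a (1 - \<alpha>) \<in> unit_cube UNIV"
    using \<alpha> by (auto intro!: vec_upd_in_cube_edge vec_upd_in_unit_cube)
  then have "vec_upd p a (1 - \<alpha>) \<in> cube_edge p a \<inter> (cube_facet a (1 - \<alpha>) \<inter> cube_facet b \<beta>)"
    using p ab by (auto simp: cube_facet_def)
  moreover have "p \<notin> cube_facet a (1 - \<alpha>) \<inter> cube_facet b \<beta>"
    using p \<alpha> by (auto simp: cube_facet_def)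
  moreover have "e \<noteq> 0"
    using e(1) by (simp add: prim_edge_dirs_def)
  ultimately show ?thesis
    using edge_along_reaches_face[OF v(1) e(2) _ faces(2)] by (auto simp: p_def)
qed

lemma edge_along_independent_mod:
  assumes ab: "a \<noteq> b" and \<alpha>: "\<alpha> = 0 \<or> \<alpha> = 1" and \<beta>: "\<beta> = 0 \<or> \<beta> = 1"
    and v: "v extreme_point_of C" "v \<in> \<psi> (cube_facet a \<alpha> \<inter> cube_facet b \<beta>)"
    and e: "e \<in> prim_edge_dirs C v" "edge_along v e a"
    and f: "f \<in> prim_edge_dirs C v" "edge_along v f b"
    and "x *\<^sub>R e + y *\<^sub>R f \<in> lin_space (\<psi> (cube_facet a \<alpha> \<inter> cube_facet b \<beta>))"
  shows "x = 0 \<and> y = 0"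
proof -
  let ?L = "lin_space (\<psi> (cube_facet a \<alpha> \<inter> cube_facet b \<beta>))"
  note facet_a = cube_facet_face_of[OF \<alpha>, of a] and facet_b = cube_facet_face_of[OF \<beta>, of b]
  have p: "vertex_label v $ a = \<alpha>" "vertex_label v $ b = \<beta>"
    using vertex_in_\<psi>_iff[OF v(1) face_of_Int[OF facet_a facet_b]] v(2)
    by (simp_all add: cube_facet_def)
  obtain na da where na: "C \<subseteq> {z. na \<bullet> z \<le> da}" "\<psi> (cube_facet a \<alpha>) = C \<inter> {z. na \<bullet> z = da}"
    using \<psi>_normal[OF facet_a] by blast
  obtain nb db where nb: "C \<subseteq> {z. nb \<bullet> z \<le> db}" "\<psi> (cube_facet b \<beta>) = C \<inter> {z. nb \<bullet> z = db}"
    using \<psi>_normal[OF facet_b] by blast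
  have "\<psi> (cube_facet a \<alpha> \<inter> cube_facet b \<beta>) \<subseteq> \<psi> (cube_facet a \<alpha>) \<inter> \<psi> (cube_facet b \<beta>)"
    using \<psi>_mono[OF face_of_Int[OF facet_a facet_b]] facet_a facet_b by auto
  then have "na \<bullet> l = 0" "nb \<bullet> l = 0" if "l \<in> ?L" for l
    using lin_space_orthogonal that na(2) nb(2) by blast+
  moreover have "na \<bullet> e < 0" "na \<bullet> f = 0" "nb \<bullet> e = 0" "nb \<bullet> f < 0"
    using edge_along_facet_normal[OF v(1) e, of na da a]
      edge_along_facet_normal[OF v(1) f, of na da a]
      edge_along_facet_normal[OF v(1) e, of nb db b] edge_along_facet_normal[OF v(1) f, of nb db b]
      na nb p ab by simp_all
  ultimately show ?thesis
    using independent_mod_by_normals[of ?L na nb e f x y] assms(10) by force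
qed

lemma corner_lattice_basis:
  assumes ab: "a \<noteq> b" and \<alpha>: "\<alpha> = 0 \<or> \<alpha> = 1" and \<beta>: "\<beta> = 0 \<or> \<beta> = 1"
    and v: "v extreme_point_of C" "v \<in> \<psi> (cube_facet a \<alpha> \<inter> cube_facet b \<beta>)"
  obtains e f where "lattice_basis_mod (lin_space (\<psi> (cube_facet a \<alpha> \<inter> cube_facet b \<beta>))) e f"
    and "\<exists>s>0. v + s *\<^sub>R e \<in> \<psi> (cube_facet a (1 - \<alpha>) \<inter> cube_facet b \<beta>)"
    and "\<exists>t>0. v + t *\<^sub>R f \<in> \<psi> (cube_facet a \<alpha> \<inter> cube_facet b (1 - \<beta>))"
proof -
  define K where "K = cube_facet a \<alpha> \<inter> cube_facet b \<beta>"
  let ?B = "prim_edge_dirs C v"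
  have K: "K face_of unit_cube UNIV"
    unfolding K_def using \<alpha> \<beta> by (intro face_of_Int cube_facet_face_of)
  obtain e where e: "e \<in> ?B" "edge_along v e a"
    using edge_along_exists[OF v(1)] by blast
  obtain f where f: "f \<in> ?B" "edge_along v f b"
    using edge_along_exists[OF v(1)] by blast
  have "?B - {e, f} \<subseteq> lin_space (\<psi> K)"
  proof
    fix u assume u: "u \<in> ?B - {e, f}"
    then obtain k where k: "edge_along v u k"
      using prim_edge_dir_along[OF v(1)] by blast
    then have "k \<noteq> a" "k \<noteq> b"
      using edge_along_unique[OF v(1)] e f u by blast+
    then have "cube_edge (vertex_label v) k \<subseteq> K"
      using vertex_in_\<psi>_iff[OF v(1) K] v(2) by (auto simp: K_def cube_edge_def cube_facet_def)
    then show "u \<in> lin_space (\<psi> K)"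
      using edge_along_lin_space[OF v(1) v(2)[folded K_def] K k] by simp
  qed
  then have "lattice_basis_mod (lin_space (\<psi> K)) e f"
    using edge_along_independent_mod[OF ab \<alpha> \<beta> v e f] unfolding K_def
    by (intro lattice_basis_mod_of_lattice_basis[OF subspace_lin_space vertex_lattice_basis[OF v(1)]
          e(1) f(1)])
  moreover have "\<exists>t>0. v + t *\<^sub>R f \<in> \<psi> (cube_facet a \<alpha> \<inter> cube_facet b (1 - \<beta>))"
    using edge_along_adjacent_ridge[OF ab[symmetric] \<beta> \<alpha> v(1) _ f] v(2) by (simp add: Int_commute)
  ultimately show ?thesis
    using that edge_along_adjacent_ridge[OF ab \<alpha> \<beta> v e] unfolding K_def by blast
qed

lemma face_extreme_point_exists:
  assumes "F face_of C" "F \<noteq> {}"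
  obtains v where "v extreme_point_of C" "v \<in> F"
proof -
  have "compact F" "convex F"
    using face_of_imp_compact
        [OF polytope_imp_convex[OF polytope_C] polytope_imp_compact[OF polytope_C]]
      face_of_imp_convex assms(1) by blast+
  then obtain v where "v extreme_point_of F"
    using extreme_point_exists_convex assms(2) by blast
  then show ?thesis
    using that extreme_point_of_face[OF assms(1)] by blast
qed

text \<open>Ridge i + 3 is the ridge preceding ridge i.\<close>

definition corner_basis :: "'d \<Rightarrow> 'd \<Rightarrow> (real^'d) set \<Rightarrow> nat \<Rightarrow> real^'d \<Rightarrow> real^'d \<Rightarrow> real^'d \<Rightarrow> bool"
  where "corner_basis x y L i v e f \<longleftrightarrow>
    v extreme_point_of C \<and> v \<in> \<psi> (square_ridge x y i) \<and> lattice_basis_mod L e f \<and>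
    (\<exists>s>0. v + s *\<^sub>R e \<in> \<psi> (square_ridge x y (Suc i))) \<and>
    (\<exists>t>0. v + t *\<^sub>R f \<in> \<psi> (square_ridge x y (i + 3)))"

lemma corner_basis_exists:
  assumes "x \<noteq> y"
  shows "\<exists>v e f. corner_basis x y (lin_space (\<psi> (square_ridge x y i))) i v e f"
proof -
  obtain a b \<alpha> \<beta> where abc: "a \<noteq> b" "\<alpha> = 0 \<or> \<alpha> = 1" "\<beta> = 0 \<or> \<beta> = 1"
    and R: "square_ridge x y i = cube_facet a \<alpha> \<inter> cube_facet b \<beta>"
      "square_ridge x y (Suc i) = cube_facet a (1 - \<alpha>) \<inter> cube_facet b \<beta>"
      "square_ridge x y (i + 3) = cube_facet a \<alpha> \<inter> cube_facet b (1 - \<beta>)"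
    using square_corner[OF assms] by blast
  have "square_ridge x y i \<noteq> {}"
    unfolding R using abc by (intro cube_facet_Int_nonempty) auto
  then obtain v where v: "v extreme_point_of C" "v \<in> \<psi> (square_ridge x y i)"
    using face_extreme_point_exists \<psi>_face(1)[OF square_ridge_face_of]
      \<psi>_nonempty[OF square_ridge_face_of]
    by metis
  obtain e f where "lattice_basis_mod (lin_space (\<psi> (square_ridge x y i))) e f"
    "\<exists>s>0. v + s *\<^sub>R e \<in> \<psi> (square_ridge x y (Suc i))"
    "\<exists>t>0. v + t *\<^sub>R f \<in> \<psi> (square_ridge x y (i + 3))"
    unfolding R by (rule corner_lattice_basis[OF abc v(1) v(2)[unfolded R]])
  then have "corner_basis x y (lin_space (\<psi> (square_ridge x y i))) i v e f"
    using v unfolding corner_basis_def by blast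
  then show ?thesis
    by blast
qed

lemma corner_bases_periodic:
  assumes xy: "x \<noteq> y" and ridges: "\<And>i. lin_space (\<psi> (square_ridge x y i)) = L"
  obtains v e f where "\<And>i. corner_basis x y L i (v i) (e i) (f i)" and "e 4 = e 0"
proof -
  obtain V E F where VEF: "\<And>i. corner_basis x y L i (V i) (E i) (F i)"
    using corner_basis_exists[OF xy, unfolded ridges] by metis
  \<comment> \<open>only the choices for i < 4 are used, which makes the families periodic\<close>
  have "corner_basis x y L i (V (i mod 4)) (E (i mod 4)) (F (i mod 4))" for i
  proof -
    have "square_ridge x y (i mod 4) = square_ridge x y i"
      "square_ridge x y (Suc (i mod 4)) = square_ridge x y (Suc i)"
      "square_ridge x y (i mod 4 + 3) = square_ridge x y (i + 3)"
      by (rule square_ridge_mod, simp add: mod_Suc_eq mod_add_left_eq)+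
    then show ?thesis
      using VEF[of "i mod 4"] unfolding corner_basis_def by simp
  qed
  then show ?thesis
    using that[of "\<lambda>i. V (i mod 4)" "\<lambda>i. E (i mod 4)" "\<lambda>i. F (i mod 4)"] by simp
qed

lemma corner_bases_adjacent:
  assumes ridges: "\<And>i. lin_space (\<psi> (square_ridge x y i)) = L"
    and corner: "\<And>i. corner_basis x y L i (v i) (e i) (f i)"
  shows "\<exists>s>0. \<exists>t>0. s *\<^sub>R e i + t *\<^sub>R f (Suc i) \<in> L"
proof -
  have "square_ridge x y (Suc i + 3) = square_ridge x y i"
    by (rule square_ridge_mod) simp
  then obtain t where "t > 0" "v (Suc i) + t *\<^sub>R f (Suc i) \<in> \<psi> (square_ridge x y i)"
    using corner[of "Suc i"] unfolding corner_basis_def by auto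
  moreover obtain s where "s > 0" "v i + s *\<^sub>R e i \<in> \<psi> (square_ridge x y (Suc i))"
    using corner[of i] unfolding corner_basis_def by blast
  moreover have "v i \<in> \<psi> (square_ridge x y i)" "v (Suc i) \<in> \<psi> (square_ridge x y (Suc i))"
    using corner unfolding corner_basis_def by blast+
  ultimately show ?thesis
    using adjacent_rays_in_lin_space[OF ridges ridges] by blast
qed

lemma square_side_normals:
  obtains n c where "\<And>i. C \<subseteq> {z. n i \<bullet> z \<le> c i}"
    "\<And>i. \<psi> (square_side x y i) = C \<inter> {z. n i \<bullet> z = c i}"
proof -
  have "\<exists>n c. C \<subseteq> {z. n \<bullet> z \<le> c} \<and> \<psi> (square_side x y i) = C \<inter> {z. n \<bullet> z = c}" for i
  proof -
    obtain n c where "C \<subseteq> {z. n \<bullet> z \<le> c}" "\<psi> (square_side x y i) = C \<inter> {z. n \<bullet> z = c}"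
      by (rule \<psi>_normal[OF square_side_face_of])
    then show ?thesis
      by blast
  qed
  then show ?thesis
    using that by metis
qed

lemma corner_bases_side_normals:
  assumes xy: "x \<noteq> y" and ridges: "\<And>i. lin_space (\<psi> (square_ridge x y i)) = L"
    and corner: "\<And>i. corner_basis x y L i (v i) (e i) (f i)"
    and n: "\<And>i. C \<subseteq> {z. n i \<bullet> z \<le> c i}" "\<And>i. \<psi> (square_side x y i) = C \<inter> {z. n i \<bullet> z = c i}"
  shows "l \<in> L \<Longrightarrow> n i \<bullet> l = 0" and "n i \<bullet> e i = 0" and "e i \<in> lin_space (\<psi> (square_side x y i))"
    and "n i \<bullet> f i < 0" and "n i \<bullet> e (Suc i) < 0"
proof -
  let ?R = "\<lambda>i. \<psi> (square_ridge x y i)" and ?S = "\<lambda>i. \<psi> (square_side x y i)"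
  note sign = ray_normal_sign[OF n(1) n(2) square_side_face_of square_ridge_face_of]
  have RS: "?R i \<subseteq> ?S i" "?R (Suc i) \<subseteq> ?S i"
    using \<psi>_mono[OF square_ridge_face_of square_side_face_of] square_ridge_subset_side by blast+
  have v: "v i \<in> ?S i" "v (Suc i) \<in> ?S i"
    using RS corner unfolding corner_basis_def by blast+
  show "n i \<bullet> l = 0" if "l \<in> L"
    using lin_space_orthogonal[of "?R i" "n i" "c i" l] RS(1) n(2) that ridges by blast
  obtain s where s: "s > 0" "v i + s *\<^sub>R e i \<in> ?R (Suc i)"
    using corner[of i] unfolding corner_basis_def by blast
  then show "n i \<bullet> e i = 0" "e i \<in> lin_space (?S i)"
    using sign(1)[OF v(1)] square_ridge_subset_side(2) ray_in_lin_space[OF v(1)] RS(2)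
    by (blast, fastforce)
  show "n i \<bullet> f i < 0"
    using corner[of i] sign(2)[OF v(1)] square_ridge_disjoint_side(2)[OF xy]
    unfolding corner_basis_def by blast
  obtain s' where "s' > 0" "v (Suc i) + s' *\<^sub>R e (Suc i) \<in> ?R (Suc (Suc i))"
    using corner[of "Suc i"] unfolding corner_basis_def by blast
  moreover have "square_ridge x y (Suc (Suc i)) \<inter> square_side x y i = {}"
    using square_ridge_disjoint_side(1)[OF xy, of i] by (simp add: add_2_eq_Suc')
  ultimately show "n i \<bullet> e (Suc i) < 0"
    using sign(2)[OF v(2)] by blast
qed

lemma square_opposite_sides_parallel:
  assumes xy: "x \<noteq> y" and ridges: "\<And>i. lin_space (\<psi> (square_ridge x y i)) = L"
  shows "lin_space (\<psi> (square_side x y 0)) = lin_space (\<psi> (square_side x y 2))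
       \<or> lin_space (\<psi> (square_side x y 1)) = lin_space (\<psi> (square_side x y 3))"
proof -
  have L: "subspace L"
    using ridges[of 0] subspace_lin_space by metis
  obtain v e f where corner: "\<And>i. corner_basis x y L i (v i) (e i) (f i)" and "e 4 = e 0"
    using corner_bases_periodic[OF xy ridges] by blast
  obtain n c where n: "\<And>i. C \<subseteq> {z. n i \<bullet> z \<le> c i}"
    "\<And>i. \<psi> (square_side x y i) = C \<inter> {z. n i \<bullet> z = c i}"
    using square_side_normals by blast
  note normals = corner_bases_side_normals[OF xy ridges corner n]
  have basis: "lattice_basis_mod L (e i) (f i)" for i
    using corner unfolding corner_basis_def by blast
  have "lattice_cycle L e f n"
    by unfold_locales
      (fact L basis corner_bases_adjacent[OF ridges corner] normals(1) normals(2,4,5))+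
  from lattice_cycle.opposite[OF this \<open>e 4 = e 0\<close>]
  have key: "e 0 + e 2 \<in> L \<or> e 1 + e 3 \<in> L" .
  have side: "lin_space (\<psi> (square_side x y i)) = {w. \<exists>a. w - a *\<^sub>R e i \<in> L}" for i
  proof (rule lin_space_eq_line_mod[OF L _ normals(3) basis _ _ normals(1)])
    show "L \<subseteq> lin_space (\<psi> (square_side x y i))"
      using lin_space_mono[OF \<psi>_mono[OF square_ridge_face_of square_side_face_of]]
        square_ridge_subset_side(1) ridges by blast
    show "\<forall>z\<in>\<psi> (square_side x y i). n i \<bullet> z = c i"
      using n(2) by blast
    show "n i \<bullet> f i \<noteq> 0"
      using normals(4)[of i] by simp
  qed
  from key show ?thesis
  proof
    assume "e 0 + e 2 \<in> L"
    then show ?thesis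
      unfolding side by (intro disjI1 line_mod_eq_opposite[OF L])
  next
    assume "e 1 + e 3 \<in> L"
    then show ?thesis
      unfolding side by (intro disjI2 line_mod_eq_opposite[OF L])
  qed
qed
end

theorem lemma3p6:
  fixes C :: "(real^'d) set" and \<phi> :: "(real^'d) set \<Rightarrow> (real^'d) set" and x y :: 'd
  assumes "CARD('d) \<ge> 3"
    and "smooth_polytope UNIV C"
    and "face_poset_iso UNIV C \<phi>"
    and "\<forall>(K::'d set) P. 1 \<le> card K \<and> card K < CARD('d) \<and> smooth_polytope K P \<and> comb_cube K P \<longrightarrow>
            (\<exists>F G. F facet_of P \<and> G facet_of P \<and> F \<noteq> G \<and> parallel_faces F G)"
    and "x \<noteq> y"
    and "\<forall>A\<in>{lab_face C \<phi> {x,y} {}, lab_face C \<phi> {x} {y}, lab_face C \<phi> {y} {x}, lab_face C \<phi> {} {x,y}}.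
         \<forall>B\<in>{lab_face C \<phi> {x,y} {}, lab_face C \<phi> {x} {y}, lab_face C \<phi> {y} {x}, lab_face C \<phi> {} {x,y}}.
           parallel_faces A B"
  shows "parallel_faces (lab_face C \<phi> {x} {}) (lab_face C \<phi> {} {x})
       \<or> parallel_faces (lab_face C \<phi> {y} {}) (lab_face C \<phi> {} {y})"
proof -
  interpret labelled_cube C \<phi>
    using assms(2,3) by unfold_locales
  have lab: "lab_face C \<phi> I J = \<psi> (cube_face I J)" for I J
    by (simp add: lab_face_def \<psi>_def)
  note square = cube_face_square[OF assms(5)]
  let ?R = "\<lambda>i. \<psi> (square_ridge x y i)"
  have "\<forall>B\<in>{?R 0, ?R 1, ?R 3, ?R 2}. lin_space (?R 0) = lin_space B"
    using assms(6) unfolding lab square parallel_faces_def by blast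
  moreover have "?R i \<in> {?R 0, ?R 1, ?R 3, ?R 2}" for i
    using square_ridge_cases[of x y i] by auto
  ultimately have "lin_space (?R i) = lin_space (?R 0)" for i
    by metis
  from square_opposite_sides_parallel[OF assms(5) this] show ?thesis
    unfolding parallel_faces_def lab square by auto
qed

end
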